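(* There exist $\varepsilon_1>0$ and $C>0$ such that for all $\varepsilon\in(0,\varepsilon_1]$ the following holds. Consider an initial condition of the hard core system with $n_1=n_2=1$ with $h_\varepsilon(0)\in\mathcal V$ and $\varphi_1=0$ at time $0$; let $t_{1,\varepsilon}=\inf\{t>0:\varphi_{1,\varepsilon}(t)=0\}$, and let $z_0(t)$ be the unperturbed ($\varepsilon=0$) motion from $z_0(0)=z_\varepsilon(0)$ (in which $X,W,s_1,s_2$ stay constant and $\varphi_1,\varphi_2$ rotate with constant rates $s_1/(2X)$ and $s_2/(2(1-X))$). If $t_{1,\varepsilon}\le (T\wedge T_\varepsilon)/\varepsilon$, then \[ \sup_{0\le t\le t_{1,\varepsilon}}|z_0(t)-z_\varepsilon(t)|\le C\varepsilon \] (distance in the coordinates $z=(X,W,s_1,s_2,\varphi_1,\varphi_2)$, angles modulo $1$).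
   Context: Hard core piston system with $n_1=n_2=1$: a piston of mass $M$ at position $X\in(0,1)$ with velocity $V$, a gas particle of mass $m_1$ at $x_1\in[0,X]$ with velocity $v_1$ and one of mass $m_2$ at $x_2\in[X,1]$ with velocity $v_2$; particles move freely between collisions, gas particles collide elastically with walls at $0$ and $1$ and with the piston (conservation of momentum and kinetic energy); if both gas particles hit the piston simultaneously, the left collision is applied first. Set $\varepsilon=M^{-1/2}$, $W=V/\varepsilon$, $s_i=|v_i|$, slow variables $h=(X,W,s_1,s_2)$. Angle variables in $\mathbb R/\mathbb Z$: $\varphi_1=x_1/(2X)$ if $v_1>0$, $\varphi_1=1-x_1/(2X)$ if $v_1<0$; $\varphi_2=(1-x_2)/(2(1-X))$ if $v_2<0$, $\varphi_2=1-(1-x_2)/(2(1-X))$ if $v_2>0$ (piston collisions occur exactly when $\varphi_i=1/2$). $z_\varepsilon(t)=(h_\varepsilon(t),\varphi_{1,\varepsilon}(t),\varphi_{2,\varepsilon}(t))$ denotes the motion with $M=\varepsilon^{-2}$ (left continuous in $t$). Averaged field $\bar H(h)=\bigl(W,\ m_1s_1^2/X-m_2s_2^2/(1-X),\ -s_1W/X,\ s_2W/(1-X)\bigr)$; $\bar h$ solves $d\bar h/d\tau=\bar H(\bar h)$, $\bar h(0)=h_\varepsilon(0)$. $\mathcal V\subset\mathbb R^4$ is compact with $h\in\mathcal V\Rightarrow X\in A,W\in B,s_i\in C$ for compact $A\subset(0,1)$, $B\subset\mathbb R$, $C\subset(0,\infty)$. $T>0$ fixed; $T_\varepsilon=\inf\{\tau\ge0:\bar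 h(\tau)\notin\mathcal V\text{ or }h_\varepsilon(\tau/\varepsilon)\notin\mathcal V\}$. *)

theory Defs
  imports "HOL-Analysis.Analysis"
begin

text \<open>Full phase-space state: piston position X and velocity V, left particle
  position x1 and velocity v1, right particle position x2 and velocity v2.\<close>

record pst =
  pX  :: real
  pV  :: real
  px1 :: real
  pv1 :: real
  px2 :: real
  pv2 :: real

definition fly :: "pst \<Rightarrow> real \<Rightarrow> pst" where
  "fly s d = s\<lparr>pX := pX s + pV s * d, px1 := px1 s + pv1 s * d, px2 := px2 s + pv2 s * d\<rparr>"

definition event_delays :: "pst \<Rightarrow> real set" where
  "event_delays s = {d.
      (pv1 s < 0 \<and> d = px1 s / (- pv1 s))
    \<or> (pv1 s > pV s \<and> d = (pX s - px1 s) / (pv1 s - pV s))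
    \<or> (pv2 s < pV s \<and> d = (px2 s - pX s) / (pV s - pv2 s))
    \<or> (pv2 s > 0 \<and> d = (1 - px2 s) / pv2 s)}"

definition next_delay :: "pst \<Rightarrow> real option" where
  "next_delay s = (if event_delays s = {} then None else Some (Min (event_delays s)))"

text \<open>Elastic collisions (conservation of momentum and kinetic energy); M is the
  piston mass, m the gas particle mass.\<close>
definition collide_left :: "real \<Rightarrow> real \<Rightarrow> pst \<Rightarrow> pst" where
  "collide_left M m s = s\<lparr>pv1 := ((m - M) * pv1 s + 2 * M * pV s) / (m + M),
                          pV := ((M - m) * pV s + 2 * m * pv1 s) / (m + M)\<rparr>"

definition collide_right :: "real \<Rightarrow> real \<Rightarrow> pst \<Rightarrow> pst" where
  "collide_right M m s = s\<lparr>pv2 := ((m - M) * pv2 s + 2 * M * pV s) / (m + M),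
                           pV := ((M - m) * pV s + 2 * m * pv2 s) / (m + M)\<rparr>"

definition resolve :: "real \<Rightarrow> real \<Rightarrow> real \<Rightarrow> pst \<Rightarrow> pst" where
  "resolve M m1 m2 s =
    (let s1 = (if px1 s = 0 \<and> pv1 s < 0 then s\<lparr>pv1 := - pv1 s\<rparr>
               else if px1 s = pX s \<and> pv1 s > pV s then collide_left M m1 s
               else s)
     in (if px2 s1 = pX s1 \<and> pv2 s1 < pV s1 then collide_right M m2 s1
         else if px2 s1 = 1 \<and> pv2 s1 > 0 then s1\<lparr>pv2 := - pv2 s1\<rparr>
         else s1))"

fun events :: "real \<Rightarrow> real \<Rightarrow> real \<Rightarrow> pst \<Rightarrow> nat \<Rightarrow> real \<times> pst" where
  "events M m1 m2 s0 0 = (0, s0)"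
| "events M m1 m2 s0 (Suc k) =
    (case events M m1 m2 s0 k of (t, s) \<Rightarrow>
       (case next_delay s of None \<Rightarrow> (t, s)
        | Some d \<Rightarrow> (t + d, resolve M m1 m2 (fly s d))))"

text \<open>The motion (left continuous in t), for piston mass M and gas masses m1, m2,
  from initial state s0.\<close>
definition motion :: "real \<Rightarrow> real \<Rightarrow> real \<Rightarrow> pst \<Rightarrow> real \<Rightarrow> pst" where
  "motion M m1 m2 s0 t =
    (if t \<le> 0 then s0
     else if (\<exists>k. next_delay (snd (events M m1 m2 s0 k)) = None
                 \<or> t \<le> fst (events M m1 m2 s0 (Suc k)))
     then (let k = (LEAST k. next_delay (snd (events M m1 m2 s0 k)) = None
                           \<or> t \<le> fst (events M m1 m2 s0 (Suc k)))
           in fly (snd (events M m1 m2 s0 k)) (t - fst (events M m1 m2 s0 k)))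
     else undefined)"

definition emotion :: "real \<Rightarrow> real \<Rightarrow> real \<Rightarrow> pst \<Rightarrow> real \<Rightarrow> pst" where
  "emotion eps m1 m2 s0 t = motion (1 / eps\<^sup>2) m1 m2 s0 t"

definition hslow :: "real \<Rightarrow> pst \<Rightarrow> real \<times> real \<times> real \<times> real" where
  "hslow eps s = (pX s, pV s / eps, \<bar>pv1 s\<bar>, \<bar>pv2 s\<bar>)"

text \<open>Angle variables (real representatives of elements of R/Z).\<close>
definition phi1 :: "pst \<Rightarrow> real" where
  "phi1 s = (if pv1 s < 0 then 1 - px1 s / (2 * pX s) else px1 s / (2 * pX s))"

definition phi2 :: "pst \<Rightarrow> real" where
  "phi2 s = (if pv2 s < 0 then (1 - px2 s) / (2 * (1 - pX s))
             else 1 - (1 - px2 s) / (2 * (1 - pX s)))"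

definition zcoord :: "real \<Rightarrow> pst \<Rightarrow> real \<times> real \<times> real \<times> real \<times> real \<times> real" where
  "zcoord eps s = (pX s, pV s / eps, \<bar>pv1 s\<bar>, \<bar>pv2 s\<bar>, phi1 s, phi2 s)"

definition zfree :: "real \<times> real \<times> real \<times> real \<times> real \<times> real \<Rightarrow> real
                     \<Rightarrow> real \<times> real \<times> real \<times> real \<times> real \<times> real" where
  "zfree z t = (case z of (X, W, s1, s2, p1, p2) \<Rightarrow>
      (X, W, s1, s2, p1 + s1 / (2 * X) * t, p2 + s2 / (2 * (1 - X)) * t))"

definition circ_dist :: "real \<Rightarrow> real \<Rightarrow> real" where
  "circ_dist a b = \<bar>(a - b) - of_int (round (a - b))\<bar>"

definition zdist :: "real \<times> real \<times> real \<times> real \<times> real \<times> real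
                   \<Rightarrow> real \<times> real \<times> real \<times> real \<times> real \<times> real \<Rightarrow> real" where
  "zdist z z' = (case z of (X, W, s1, s2, p1, p2) \<Rightarrow> case z' of (X', W', s1', s2', p1', p2') \<Rightarrow>
      Max {\<bar>X - X'\<bar>, \<bar>W - W'\<bar>, \<bar>s1 - s1'\<bar>, \<bar>s2 - s2'\<bar>, circ_dist p1 p1', circ_dist p2 p2'})"

definition Hbar :: "real \<Rightarrow> real \<Rightarrow> real \<times> real \<times> real \<times> real \<Rightarrow> real \<times> real \<times> real \<times> real" where
  "Hbar m1 m2 h = (case h of (X, W, s1, s2) \<Rightarrow>
      (W, m1 * s1\<^sup>2 / X - m2 * s2\<^sup>2 / (1 - X), - s1 * W / X, s2 * W / (1 - X)))"

text \<open>The set whose infimum is T_eps.\<close>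
definition exit_set :: "real \<Rightarrow> real \<Rightarrow> real \<Rightarrow> (real \<times> real \<times> real \<times> real) set \<Rightarrow> pst
                        \<Rightarrow> (real \<Rightarrow> real \<times> real \<times> real \<times> real) \<Rightarrow> real set" where
  "exit_set eps m1 m2 Vs s0 hb =
     {\<tau>. \<tau> \<ge> 0 \<and> (hb \<tau> \<notin> Vs \<or> hslow eps (emotion eps m1 m2 s0 (\<tau> / eps)) \<notin> Vs)}"

text \<open>min T T_eps, with inf of the empty set = +infinity.\<close>
definition T_min :: "real \<Rightarrow> real set \<Rightarrow> real" where
  "T_min T E = (if E = {} then T else min T (Inf E))"

text \<open>Set whose infimum is t_{1,eps}.\<close>
definition return_set :: "real \<Rightarrow> real \<Rightarrow> real \<Rightarrow> pst \<Rightarrow> real set" where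
  "return_set eps m1 m2 s0 = {t. t > 0 \<and> phi1 (emotion eps m1 m2 s0 t) \<in> \<int>}"

end

theory Submission
  imports Defs
begin

(*
  With piston mass M = eps^-2 the slow variables evolve on the time scale 1/eps, whereas the
  left particle returns to the wall after a time O(1); so every quantity has to be controlled
  to first order in eps over a bounded time interval.

  Energy conservation bounds W = V/eps and both speeds.  Every collision also preserves the
  weighted momentum M V + m1 v1 x1/X + m2 v2 (1 - x2)/(1 - X), whose weights are 1 at the
  piston and 0 at the walls; between collisions it drifts at rate O(1), and since W is eps
  times this quantity up to bounded terms, W moves by O(eps).  The left particle starts at the
  wall, reaches the piston with its exact speed s1, is reflected with speed s1 + O(eps) and is
  back at the wall before time 3/c; energy conservation then keeps |v2| within O(eps) of s2.
  Each collision of the right particle leaves it at distance at least (1 - b)/2 from its next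
  obstacle, so only finitely many collisions occur before the return.  During each free flight
  the angles rotate at rates within O(eps) of s1/(2X) and s2/(2(1 - X)), and collisions shift
  them by integers.
*)

section \<open>Elementary estimates\<close>

lemma abs_le_one_plus_if_power2_le:
  fixes x Q :: real
  assumes "x\<^sup>2 \<le> Q"
  shows "\<bar>x\<bar> \<le> 1 + Q"
proof (cases "\<bar>x\<bar> \<le> 1")
  case True
  then show ?thesis using assms zero_le_power2[of x] by linarith
next
  case False
  then have "\<bar>x\<bar> * 1 \<le> \<bar>x\<bar> * \<bar>x\<bar>" by (intro mult_left_mono) auto
  then show ?thesis using assms by (simp add: power2_eq_square)
qed

lemma ratio_increment:
  fixes y w t Y U :: real
  assumes "Y \<noteq> 0" "Y + U * t \<noteq> 0"
  shows "(y + w * t) / (Y + U * t) - y / Y = t * (w * Y - y * U) / (Y * (Y + U * t))"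
  using assms by (simp add: field_simps)

lemma ratio_increment_bound:
  fixes y w t Y U P Q Ymin :: real
  assumes "0 < Y" "0 < Ymin" "Ymin \<le> Y + U * t" "0 \<le> y" "y \<le> Y" "\<bar>w\<bar> \<le> P" "\<bar>U\<bar> \<le> Q" "0 \<le> t"
  shows "\<bar>(y + w * t) / (Y + U * t) - y / Y\<bar> \<le> t * (P + Q) / Ymin"
proof -
  have Y': "0 < Y + U * t" using assms(2,3) by linarith
  have "\<bar>w * Y - y * U\<bar> \<le> \<bar>w\<bar> * Y + y * \<bar>U\<bar>"
    using assms(1,4) by (simp add: abs_mult order.trans[OF abs_triangle_ineq4])
  also have "\<dots> \<le> P * Y + Y * Q"
    using assms by (intro add_mono mult_mono) auto
  finally have num: "\<bar>w * Y - y * U\<bar> \<le> Y * (P + Q)" by (simp add: algebra_simps)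
  have "\<bar>t * (w * Y - y * U) / (Y * (Y + U * t))\<bar> = t * \<bar>w * Y - y * U\<bar> / (Y * (Y + U * t))"
    using assms(1,8) Y' by (simp add: abs_mult)
  also have "\<dots> \<le> t * (Y * (P + Q)) / (Y * (Y + U * t))"
    using num assms(1,8) Y' by (intro divide_right_mono mult_left_mono) auto
  also have "\<dots> = t * (P + Q) / (Y + U * t)" using assms(1) by simp
  also have "\<dots> \<le> t * (P + Q) / Ymin"
    using assms(2,3,6,7,8) by (intro divide_left_mono mult_nonneg_nonneg) auto
  finally show ?thesis using ratio_increment[of Y U t y w] assms(1) Y' by simp
qed

lemma half_ratio_increment:
  fixes y w t Y U :: real
  assumes "Y \<noteq> 0" "Y + U * t \<noteq> 0"
  shows "(y + w * t) / (2 * (Y + U * t)) - y / (2 * Y)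
       = t * (w * Y - y * U) / (2 * Y * (Y + U * t))"
proof -
  have "a / (2 * b) = a / b / 2" "a / (2 * b * c) = a / (b * c) / 2" for a b c :: real
    by simp_all
  then show ?thesis using ratio_increment[OF assms, of y w] by (metis diff_divide_distrib)
qed

lemma phase_rate_error:
  fixes u s Y Y' Y0 y U t e mu Cv CX Wm vm :: real
  assumes "0 < mu" "mu \<le> Y" "mu \<le> Y'" "mu \<le> Y0" "0 \<le> y" "y \<le> Y" "0 \<le> t"
    "\<bar>u - s\<bar> \<le> Cv * e" "\<bar>Y0 - Y'\<bar> \<le> CX * e" "\<bar>U\<bar> \<le> e * Wm" "0 \<le> s" "s \<le> vm"
  shows "\<bar>t * (u * Y - y * U) / (2 * Y * Y') - s / (2 * Y0) * t\<bar>
         \<le> (Cv / (2 * mu) + vm * CX / (2 * mu\<^sup>2) + Wm / (2 * mu)) * e * t"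
proof -
  have pos: "0 < Y" "0 < Y'" "0 < Y0" using assms(1-4) by linarith+
  have split: "t * (u * Y - y * U) / (2 * Y * Y') - s / (2 * Y0) * t
     = t * ((u - s) / (2 * Y') + s * (Y0 - Y') / (2 * Y' * Y0) - y * U / (2 * Y * Y'))"
    using pos by (simp add: field_simps)
  have b1: "\<bar>(u - s) / (2 * Y')\<bar> \<le> Cv * e / (2 * mu)"
    using pos assms by (simp add: abs_divide frac_le)
  have "s * \<bar>Y0 - Y'\<bar> / (2 * Y' * Y0) \<le> vm * (CX * e) / (2 * mu * mu)"
  proof (rule frac_le)
    show "0 \<le> vm * (CX * e)" using assms(8-12) by (meson abs_ge_zero order.trans mult_nonneg_nonneg)
    show "s * \<bar>Y0 - Y'\<bar> \<le> vm * (CX * e)" using assms by (intro mult_mono) auto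
    show "2 * mu * mu \<le> 2 * Y' * Y0" using assms by (intro mult_mono) auto
  qed (use assms(1) in simp)
  then have b2: "\<bar>s * (Y0 - Y') / (2 * Y' * Y0)\<bar> \<le> vm * (CX * e) / (2 * mu * mu)"
    using pos assms(11) by (simp add: abs_divide abs_mult)
  have "y * \<bar>U\<bar> / (2 * Y * Y') \<le> Y * \<bar>U\<bar> / (2 * Y * Y')"
    using pos assms(5,6) by (intro divide_right_mono mult_right_mono) auto
  also have "\<dots> \<le> e * Wm / (2 * mu)"
    using pos assms by (simp add: frac_le)
  finally have b3: "\<bar>y * U / (2 * Y * Y')\<bar> \<le> e * Wm / (2 * mu)"
    using pos assms(5) by (simp add: abs_divide abs_mult)
  have "\<bar>(u - s) / (2 * Y') + s * (Y0 - Y') / (2 * Y' * Y0) - y * U / (2 * Y * Y')\<bar>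
      \<le> Cv * e / (2 * mu) + vm * (CX * e) / (2 * mu * mu) + e * Wm / (2 * mu)"
    using b1 b2 b3 by linarith
  also have "\<dots> = (Cv / (2 * mu) + vm * CX / (2 * mu\<^sup>2) + Wm / (2 * mu)) * e"
    by (simp add: field_simps power2_eq_square)
  finally have "\<bar>(u - s) / (2 * Y') + s * (Y0 - Y') / (2 * Y' * Y0) - y * U / (2 * Y * Y')\<bar>
      \<le> (Cv / (2 * mu) + vm * CX / (2 * mu\<^sup>2) + Wm / (2 * mu)) * e" .
  then show ?thesis
    unfolding split abs_mult using assms(7) by (simp add: mult_left_mono mult.commute)
qed

lemma speed_deviation_from_energy:
  fixes W W0 v1 v10 v2 v20 m1 m2 CW C1 Wm vm c e :: real
  assumes energy: "W\<^sup>2 + m1 * v1\<^sup>2 + m2 * v2\<^sup>2 = W0\<^sup>2 + m1 * v10\<^sup>2 + m2 * v20\<^sup>2"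
    and "\<bar>W - W0\<bar> \<le> CW * e" "\<bar>W\<bar> \<le> Wm" "\<bar>W0\<bar> \<le> Wm"
    and "\<bar>\<bar>v1\<bar> - \<bar>v10\<bar>\<bar> \<le> C1 * e" "\<bar>v1\<bar> \<le> vm" "\<bar>v10\<bar> \<le> vm"
    and "c \<le> \<bar>v20\<bar>" "0 < m1" "0 < m2" "0 < c"
  shows "\<bar>\<bar>v2\<bar> - \<bar>v20\<bar>\<bar> \<le> (2 * CW * Wm + 2 * m1 * C1 * vm) / (m2 * c) * e"
proof -
  have diff: "m2 * ((\<bar>v2\<bar> - \<bar>v20\<bar>) * (\<bar>v2\<bar> + \<bar>v20\<bar>))
      = (W0 - W) * (W0 + W) + m1 * ((\<bar>v10\<bar> - \<bar>v1\<bar>) * (\<bar>v10\<bar> + \<bar>v1\<bar>))"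
    using energy by (simp add: algebra_simps power2_eq_square abs_mult_self_eq)
  have "\<bar>W0 + W\<bar> \<le> 2 * Wm" using assms(3,4) by linarith
  then have b1: "\<bar>(W0 - W) * (W0 + W)\<bar> \<le> CW * e * (2 * Wm)"
    unfolding abs_mult using assms(2) by (intro mult_mono) (auto simp: abs_minus_commute)
  have b2: "\<bar>(\<bar>v10\<bar> - \<bar>v1\<bar>) * (\<bar>v10\<bar> + \<bar>v1\<bar>)\<bar> \<le> C1 * e * (2 * vm)"
    unfolding abs_mult using assms(5-7) by (intro mult_mono) (auto simp: abs_minus_commute)
  have "m2 * (\<bar>\<bar>v2\<bar> - \<bar>v20\<bar>\<bar> * c) \<le> m2 * \<bar>(\<bar>v2\<bar> - \<bar>v20\<bar>) * (\<bar>v2\<bar> + \<bar>v20\<bar>)\<bar>"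
    using assms(8,10) by (auto simp: abs_mult intro!: mult_left_mono)
  also have "\<dots> = \<bar>(W0 - W) * (W0 + W) + m1 * ((\<bar>v10\<bar> - \<bar>v1\<bar>) * (\<bar>v10\<bar> + \<bar>v1\<bar>))\<bar>"
    unfolding diff[symmetric] using assms(10) by (simp add: abs_mult)
  also have "\<dots> \<le> \<bar>(W0 - W) * (W0 + W)\<bar> + m1 * \<bar>(\<bar>v10\<bar> - \<bar>v1\<bar>) * (\<bar>v10\<bar> + \<bar>v1\<bar>)\<bar>"
    using assms(9)
      abs_triangle_ineq[of "(W0 - W) * (W0 + W)" "m1 * ((\<bar>v10\<bar> - \<bar>v1\<bar>) * (\<bar>v10\<bar> + \<bar>v1\<bar>))"]
    by (simp add: abs_mult)
  also have "\<dots> \<le> CW * e * (2 * Wm) + m1 * (C1 * e * (2 * vm))"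
    using b1 b2 assms(9) by (intro add_mono mult_left_mono) auto
  finally have "\<bar>\<bar>v2\<bar> - \<bar>v20\<bar>\<bar> * (m2 * c) \<le> (2 * CW * Wm + 2 * m1 * C1 * vm) * e"
    by (simp add: algebra_simps)
  then show ?thesis using assms(10,11) by (simp add: pos_le_divide_eq mult.commute)
qed

lemma heavy_collision_reverses:
  fixes M m V v c :: real
  assumes "2 * m \<le> M" "0 < m" "v \<le> - c / 2" "\<bar>V\<bar> \<le> c / 16" "0 < c"
  shows "0 < ((m - M) * v + 2 * M * V) / (m + M)"
proof -
  have "(M / 2) * (c / 2) \<le> (M - m) * (- v)"
    using assms by (intro mult_mono) auto
  moreover have "M * (- (c / 16)) \<le> M * V" using assms by (intro mult_left_mono) auto
  ultimately have "M * c / 8 \<le> (m - M) * v + 2 * M * V" by (simp add: algebra_simps)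
  moreover have "0 < M * c / 8" using assms by simp
  ultimately have "0 < (m - M) * v + 2 * M * V" by linarith
  then show ?thesis using assms by (intro divide_pos_pos) auto
qed

lemma heavy_collision_reflection_error:
  fixes M m V s :: real
  assumes "0 < M" "0 < m" "0 \<le> s"
  shows "\<bar>((m - M) * s + 2 * M * V) / (m + M) + s\<bar> \<le> 2 * m * s / M + 2 * \<bar>V\<bar>"
proof -
  have "0 < m + M" using assms by simp
  then have "((m - M) * s + 2 * M * V) / (m + M) + s = (2 * m * s + 2 * M * V) / (m + M)"
    by (simp add: field_simps)
  also have "\<dots> = 2 * m * s / (m + M) + 2 * V * (M / (m + M))"
    by (simp add: add_divide_distrib)
  finally have "((m - M) * s + 2 * M * V) / (m + M) + s
      = 2 * m * s / (m + M) + 2 * V * (M / (m + M))" .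
  moreover have "\<bar>2 * m * s / (m + M)\<bar> \<le> 2 * m * s / M"
    using assms by (simp add: abs_divide frac_le)
  moreover have "\<bar>2 * V * (M / (m + M))\<bar> \<le> 2 * \<bar>V\<bar>"
  proof -
    have "0 \<le> M / (m + M)" "M / (m + M) \<le> 1" using assms by auto
    then have "2 * \<bar>V\<bar> * (M / (m + M)) \<le> 2 * \<bar>V\<bar>" by (intro mult_left_le) auto
    then show ?thesis using assms by (simp add: abs_mult)
  qed
  ultimately show ?thesis by linarith
qed

lemma compact_real_subset_Icc:
  fixes S I :: "real set"
  assumes "compact S" "S \<subseteq> I" "I \<noteq> {}"
  obtains a b where "a \<in> I" "b \<in> I" "S \<subseteq> {a..b}"
proof (cases "S = {}")
  case True
  with assms(3) that show ?thesis by blast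
next
  case False
  obtain a where "a \<in> S" "\<forall>t\<in>S. a \<le> t" using compact_attains_inf[OF assms(1) False] by blast
  moreover obtain b where "b \<in> S" "\<forall>t\<in>S. t \<le> b" using compact_attains_sup[OF assms(1) False]
    by blast
  ultimately show ?thesis using assms(2) by (intro that[of a b]) auto
qed

section \<open>Free flights and collisions\<close>

definition ordered_config :: "pst \<Rightarrow> bool" where
  "ordered_config s \<longleftrightarrow> 0 \<le> px1 s \<and> px1 s \<le> pX s \<and> pX s \<le> px2 s \<and> px2 s \<le> 1"

definition energy :: "real \<Rightarrow> real \<Rightarrow> real \<Rightarrow> pst \<Rightarrow> real" where
  "energy M m1 m2 s = M * (pV s)\<^sup>2 + m1 * (pv1 s)\<^sup>2 + m2 * (pv2 s)\<^sup>2"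

definition resolve_left :: "real \<Rightarrow> real \<Rightarrow> pst \<Rightarrow> pst" where
  "resolve_left M m1 s =
    (if px1 s = 0 \<and> pv1 s < 0 then s\<lparr>pv1 := - pv1 s\<rparr>
     else if px1 s = pX s \<and> pv1 s > pV s then collide_left M m1 s
     else s)"

definition resolve_right :: "real \<Rightarrow> real \<Rightarrow> pst \<Rightarrow> pst" where
  "resolve_right M m2 s =
    (if px2 s = pX s \<and> pv2 s < pV s then collide_right M m2 s
     else if px2 s = 1 \<and> pv2 s > 0 then s\<lparr>pv2 := - pv2 s\<rparr>
     else s)"

lemma resolve_eq_resolve_right_left: "resolve M m1 m2 s = resolve_right M m2 (resolve_left M m1 s)"
  unfolding resolve_def resolve_left_def resolve_right_def Let_def by simp

lemma fly_simps [simp]: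
  "pX (fly s d) = pX s + pV s * d" "px1 (fly s d) = px1 s + pv1 s * d"
  "px2 (fly s d) = px2 s + pv2 s * d" "pV (fly s d) = pV s"
  "pv1 (fly s d) = pv1 s" "pv2 (fly s d) = pv2 s"
  unfolding fly_def by simp_all

lemma collide_left_simps [simp]:
  "pX (collide_left M m s) = pX s" "px1 (collide_left M m s) = px1 s"
  "px2 (collide_left M m s) = px2 s" "pv2 (collide_left M m s) = pv2 s"
  "pv1 (collide_left M m s) = ((m - M) * pv1 s + 2 * M * pV s) / (m + M)"
  "pV (collide_left M m s) = ((M - m) * pV s + 2 * m * pv1 s) / (m + M)"
  unfolding collide_left_def by simp_all

lemma collide_right_simps [simp]:
  "pX (collide_right M m s) = pX s" "px1 (collide_right M m s) = px1 s"
  "px2 (collide_right M m s) = px2 s" "pv1 (collide_right M m s) = pv1 s"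
  "pv2 (collide_right M m s) = ((m - M) * pv2 s + 2 * M * pV s) / (m + M)"
  "pV (collide_right M m s) = ((M - m) * pV s + 2 * m * pv2 s) / (m + M)"
  unfolding collide_right_def by simp_all

lemma resolve_left_simps [simp]:
  "pX (resolve_left M m s) = pX s" "px1 (resolve_left M m s) = px1 s"
  "px2 (resolve_left M m s) = px2 s" "pv2 (resolve_left M m s) = pv2 s"
  unfolding resolve_left_def by auto

lemma resolve_right_simps [simp]:
  "pX (resolve_right M m s) = pX s" "px1 (resolve_right M m s) = px1 s"
  "px2 (resolve_right M m s) = px2 s" "pv1 (resolve_right M m s) = pv1 s"
  unfolding resolve_right_def by auto

lemma resolve_simps [simp]:
  "pX (resolve M m1 m2 s) = pX s" "px1 (resolve M m1 m2 s) = px1 s"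
  "px2 (resolve M m1 m2 s) = px2 s"
  unfolding resolve_eq_resolve_right_left by simp_all

lemma ordered_config_resolve [simp]: "ordered_config (resolve M m1 m2 s) = ordered_config s"
  unfolding ordered_config_def by simp

lemma elastic_collision_momentum:
  fixes M m V v :: real
  assumes "m + M \<noteq> 0"
  shows "M * (((M - m) * V + 2 * m * v) / (m + M)) + m * (((m - M) * v + 2 * M * V) / (m + M))
       = M * V + m * v"
proof -
  have "M * ((M - m) * V + 2 * m * v) + m * ((m - M) * v + 2 * M * V) = (M * V + m * v) * (m + M)"
    by (simp add: algebra_simps)
  then show ?thesis
    using assms by (simp add: add_divide_distrib[symmetric] nonzero_divide_eq_eq)
qed

lemma elastic_collision_energy:
  fixes M m V v :: real
  assumes "m + M \<noteq> 0"
  shows "M * (((M - m) * V + 2 * m * v) / (m + M))\<^sup>2 + m * (((m - M) * v + 2 * M * V) / (m + M))\<^sup>2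
       = M * V\<^sup>2 + m * v\<^sup>2"
proof -
  have "M * ((M - m) * V + 2 * m * v)\<^sup>2 + m * ((m - M) * v + 2 * M * V)\<^sup>2
      = (M * V\<^sup>2 + m * v\<^sup>2) * (m + M)\<^sup>2"
    by (simp add: algebra_simps power2_eq_square)
  then show ?thesis
    using assms by (simp add: power_divide add_divide_distrib[symmetric] nonzero_divide_eq_eq)
qed

lemma energy_resolve_left:
  "m1 + M \<noteq> 0 \<Longrightarrow> energy M m1 m2 (resolve_left M m1 s) = energy M m1 m2 s"
  unfolding resolve_left_def energy_def using elastic_collision_energy[of m1 M "pV s" "pv1 s"]
  by (auto simp: algebra_simps)

lemma energy_resolve_right:
  "m2 + M \<noteq> 0 \<Longrightarrow> energy M m1 m2 (resolve_right M m2 s) = energy M m1 m2 s"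
  unfolding resolve_right_def energy_def using elastic_collision_energy[of m2 M "pV s" "pv2 s"]
  by (auto simp: algebra_simps)

lemma energy_fly [simp]: "energy M m1 m2 (fly s d) = energy M m1 m2 s"
  unfolding energy_def by simp

lemma energy_resolve:
  "m1 + M \<noteq> 0 \<Longrightarrow> m2 + M \<noteq> 0 \<Longrightarrow> energy M m1 m2 (resolve M m1 m2 s) = energy M m1 m2 s"
  unfolding resolve_eq_resolve_right_left by (simp add: energy_resolve_left energy_resolve_right)

lemma finite_event_delays: "finite (event_delays s)"
proof (rule finite_subset)
  show "event_delays s \<subseteq> {px1 s / (- pv1 s), (pX s - px1 s) / (pv1 s - pV s),
      (px2 s - pX s) / (pV s - pv2 s), (1 - px2 s) / pv2 s}"
    unfolding event_delays_def by auto
qed simp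

lemma next_delay_SomeD:
  assumes "next_delay s = Some d"
  shows "d \<in> event_delays s" "\<And>e. e \<in> event_delays s \<Longrightarrow> d \<le> e"
proof -
  have "event_delays s \<noteq> {}" "d = Min (event_delays s)"
    using assms unfolding next_delay_def by (auto split: if_splits)
  then show "d \<in> event_delays s" "\<And>e. e \<in> event_delays s \<Longrightarrow> d \<le> e"
    using finite_event_delays by auto
qed

lemma next_delay_exists: "pv1 s < 0 \<or> pV s < pv1 s \<Longrightarrow> \<exists>d. next_delay s = Some d"
  unfolding next_delay_def event_delays_def by auto

lemma next_delay_no_overshoot:
  assumes "next_delay s = Some d"
  shows "pv1 s < 0 \<Longrightarrow> 0 \<le> px1 s + pv1 s * d"
    and "pV s < pv1 s \<Longrightarrow> px1 s + pv1 s * d \<le> pX s + pV s * d"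
    and "pv2 s < pV s \<Longrightarrow> pX s + pV s * d \<le> px2 s + pv2 s * d"
    and "0 < pv2 s \<Longrightarrow> px2 s + pv2 s * d \<le> 1"
proof -
  note le = next_delay_SomeD(2)[OF assms, unfolded event_delays_def mem_Collect_eq]
  show "pv1 s < 0 \<Longrightarrow> 0 \<le> px1 s + pv1 s * d"
    using le[of "px1 s / (- pv1 s)"] by (simp add: le_minus_divide_eq algebra_simps)
  show "pV s < pv1 s \<Longrightarrow> px1 s + pv1 s * d \<le> pX s + pV s * d"
    using le[of "(pX s - px1 s) / (pv1 s - pV s)"] by (simp add: pos_le_divide_eq algebra_simps)
  show "pv2 s < pV s \<Longrightarrow> pX s + pV s * d \<le> px2 s + pv2 s * d"
    using le[of "(px2 s - pX s) / (pV s - pv2 s)"] by (simp add: pos_le_divide_eq algebra_simps)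
  show "0 < pv2 s \<Longrightarrow> px2 s + pv2 s * d \<le> 1"
    using le[of "(1 - px2 s) / pv2 s"] by (simp add: pos_le_divide_eq algebra_simps)
qed

lemma next_delay_hits:
  assumes "next_delay s = Some d"
  shows "(pv1 s < 0 \<and> px1 (fly s d) = 0)
    \<or> (pV s < pv1 s \<and> px1 (fly s d) = pX (fly s d))
    \<or> (pv2 s < pV s \<and> px2 (fly s d) = pX (fly s d))
    \<or> (0 < pv2 s \<and> px2 (fly s d) = 1)"
  using next_delay_SomeD(1)[OF assms] unfolding event_delays_def by (auto simp: field_simps)

lemma next_delay_nonneg:
  assumes "ordered_config s" "next_delay s = Some d"
  shows "0 \<le> d"
  using next_delay_SomeD(1)[OF assms(2)] assms(1) unfolding event_delays_def ordered_config_def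
  by (auto intro!: divide_nonneg_pos divide_nonneg_neg)

lemma ordered_config_fly:
  assumes "ordered_config s" "next_delay s = Some d"
  shows "ordered_config (fly s d)"
proof -
  have "0 \<le> d" using next_delay_nonneg[OF assms] .
  then have "\<not> pv1 s < 0 \<Longrightarrow> 0 \<le> pv1 s * d" "\<not> pV s < pv1 s \<Longrightarrow> pv1 s * d \<le> pV s * d"
    "\<not> pv2 s < pV s \<Longrightarrow> pV s * d \<le> pv2 s * d" "\<not> 0 < pv2 s \<Longrightarrow> pv2 s * d \<le> 0"
    by (auto intro: mult_right_mono mult_nonpos_nonneg)
  then show ?thesis
    using next_delay_no_overshoot[OF assms(2)] assms(1) unfolding ordered_config_def
    by (smt (verit) fly_simps(1-3))
qed

lemma events_Suc_Some:
  assumes "next_delay (snd (events M m1 m2 s0 k)) = Some d"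
  shows "fst (events M m1 m2 s0 (Suc k)) = fst (events M m1 m2 s0 k) + d"
    "snd (events M m1 m2 s0 (Suc k)) = resolve M m1 m2 (fly (snd (events M m1 m2 s0 k)) d)"
proof -
  obtain t s where "events M m1 m2 s0 k = (t, s)" by fastforce
  then show "fst (events M m1 m2 s0 (Suc k)) = fst (events M m1 m2 s0 k) + d"
    "snd (events M m1 m2 s0 (Suc k)) = resolve M m1 m2 (fly (snd (events M m1 m2 s0 k)) d)"
    using assms by simp_all
qed

lemma events_Suc_None:
  "next_delay (snd (events M m1 m2 s0 k)) = None \<Longrightarrow> events M m1 m2 s0 (Suc k) = events M m1 m2 s0 k"
  by (cases "events M m1 m2 s0 k") simp

declare events.simps(2) [simp del]

lemma ordered_config_events:
  "ordered_config s0 \<Longrightarrow> ordered_config (snd (events M m1 m2 s0 k))"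
proof (induction k)
  case (Suc k)
  then show ?case
    by (cases "next_delay (snd (events M m1 m2 s0 k))")
      (simp_all add: events_Suc_None events_Suc_Some ordered_config_fly)
qed simp

lemma energy_events:
  "m1 + M \<noteq> 0 \<Longrightarrow> m2 + M \<noteq> 0 \<Longrightarrow> energy M m1 m2 (snd (events M m1 m2 s0 k)) = energy M m1 m2 s0"
proof (induction k)
  case (Suc k)
  then show ?case
    by (cases "next_delay (snd (events M m1 m2 s0 k))")
      (simp_all add: events_Suc_None events_Suc_Some energy_resolve)
qed simp

lemma events_time_mono:
  assumes "ordered_config s0" "j \<le> i"
  shows "fst (events M m1 m2 s0 j) \<le> fst (events M m1 m2 s0 i)"
proof -
  have "fst (events M m1 m2 s0 k) \<le> fst (events M m1 m2 s0 (Suc k))" for k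
    using next_delay_nonneg[OF ordered_config_events[OF assms(1)]]
    by (cases "next_delay (snd (events M m1 m2 s0 k))") (auto simp: events_Suc_None events_Suc_Some)
  then show ?thesis using lift_Suc_mono_le[of "\<lambda>k. fst (events M m1 m2 s0 k)"] assms(2) by blast
qed

lemma events_time_nonneg: "ordered_config s0 \<Longrightarrow> 0 \<le> fst (events M m1 m2 s0 k)"
  using events_time_mono[of s0 0 k] by simp

lemma motion_eq_fly_events:
  assumes "ordered_config s0" "0 < t"
    and "\<And>j. j \<le> k \<Longrightarrow> next_delay (snd (events M m1 m2 s0 j)) \<noteq> None"
    and "fst (events M m1 m2 s0 k) < t" "t \<le> fst (events M m1 m2 s0 (Suc k))"
  shows "motion M m1 m2 s0 t = fly (snd (events M m1 m2 s0 k)) (t - fst (events M m1 m2 s0 k))"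
proof -
  let ?P = "\<lambda>k. next_delay (snd (events M m1 m2 s0 k)) = None \<or> t \<le> fst (events M m1 m2 s0 (Suc k))"
  have "(LEAST k. ?P k) = k"
  proof (rule Least_equality)
    show "?P k" using assms(5) by blast
  next
    fix j assume "?P j"
    show "k \<le> j"
    proof (rule ccontr)
      assume "\<not> k \<le> j"
      then have "fst (events M m1 m2 s0 (Suc j)) \<le> fst (events M m1 m2 s0 k)"
        using events_time_mono[OF assms(1)] by simp
      then show False using \<open>?P j\<close> \<open>\<not> k \<le> j\<close> assms(3,4) by force
    qed
  qed
  then show ?thesis using assms(2,5) unfolding motion_def Let_def by auto
qed

definition weighted_momentum :: "real \<Rightarrow> real \<Rightarrow> real \<Rightarrow> pst \<Rightarrow> real" where
  "weighted_momentum M m1 m2 s =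
     M * pV s + m1 * pv1 s * (px1 s / pX s) + m2 * pv2 s * ((1 - px2 s) / (1 - pX s))"

lemma weighted_momentum_resolve_left:
  assumes "m1 + M \<noteq> 0" "pX s \<noteq> 0"
  shows "weighted_momentum M m1 m2 (resolve_left M m1 s) = weighted_momentum M m1 m2 s"
proof -
  have "weighted_momentum M m1 m2 (collide_left M m1 s) = weighted_momentum M m1 m2 s"
    if "px1 s = pX s"
    using that assms(2) elastic_collision_momentum[OF assms(1), of "pV s" "pv1 s"]
    by (simp add: weighted_momentum_def)
  moreover have "weighted_momentum M m1 m2 (s\<lparr>pv1 := - pv1 s\<rparr>) = weighted_momentum M m1 m2 s"
    if "px1 s = 0"
    using that by (simp add: weighted_momentum_def)
  ultimately show ?thesis unfolding resolve_left_def by (simp split: if_split)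
qed

lemma weighted_momentum_resolve_right:
  assumes "m2 + M \<noteq> 0" "pX s \<noteq> 1"
  shows "weighted_momentum M m1 m2 (resolve_right M m2 s) = weighted_momentum M m1 m2 s"
proof -
  have "weighted_momentum M m1 m2 (collide_right M m2 s) = weighted_momentum M m1 m2 s"
    if "px2 s = pX s"
    using that assms(2) elastic_collision_momentum[OF assms(1), of "pV s" "pv2 s"]
    by (simp add: weighted_momentum_def)
  moreover have "weighted_momentum M m1 m2 (s\<lparr>pv2 := - pv2 s\<rparr>) = weighted_momentum M m1 m2 s"
    if "px2 s = 1"
    using that by (simp add: weighted_momentum_def)
  ultimately show ?thesis unfolding resolve_right_def by (simp split: if_split)
qed

lemma weighted_momentum_resolve:
  assumes "m1 + M \<noteq> 0" "m2 + M \<noteq> 0" "pX s \<noteq> 0" "pX s \<noteq> 1"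
  shows "weighted_momentum M m1 m2 (resolve M m1 m2 s) = weighted_momentum M m1 m2 s"
  using assms unfolding resolve_eq_resolve_right_left
  by (simp add: weighted_momentum_resolve_left weighted_momentum_resolve_right)

lemma phi1_at_piston: "px1 s = pX s \<Longrightarrow> pX s \<noteq> 0 \<Longrightarrow> phi1 s = 1 / 2"
  unfolding phi1_def by simp

lemma phi2_at_piston: "px2 s = pX s \<Longrightarrow> pX s \<noteq> 1 \<Longrightarrow> phi2 s = 1 / 2"
  unfolding phi2_def by simp

lemma phi1_resolve_left_diff:
  assumes "pX s \<noteq> 0" shows "phi1 (resolve_left M m s) - phi1 s \<in> \<int>"
proof -
  have "phi1 (s\<lparr>pv1 := - pv1 s\<rparr>) - phi1 s = -1" if "px1 s = 0" "pv1 s < 0"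
    using that by (simp add: phi1_def)
  moreover have "phi1 (collide_left M m s) - phi1 s = 0" if "px1 s = pX s"
    using that assms phi1_at_piston[of s] phi1_at_piston[of "collide_left M m s"] by simp
  ultimately show ?thesis unfolding resolve_left_def by (simp split: if_split)
qed

lemma phi2_resolve_right_diff:
  assumes "pX s \<noteq> 1" shows "phi2 (resolve_right M m s) - phi2 s \<in> \<int>"
proof -
  have "phi2 (collide_right M m s) - phi2 s = 0" if "px2 s = pX s"
    using that assms phi2_at_piston[of s] phi2_at_piston[of "collide_right M m s"] by simp
  moreover have "phi2 (s\<lparr>pv2 := - pv2 s\<rparr>) - phi2 s = -1" if "px2 s = 1" "0 < pv2 s"
    using that by (simp add: phi2_def)
  ultimately show ?thesis unfolding resolve_right_def by (simp split: if_split)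
qed

lemma phi1_resolve_right [simp]: "phi1 (resolve_right M m s) = phi1 s"
  unfolding phi1_def by simp

lemma phi2_resolve_left [simp]: "phi2 (resolve_left M m s) = phi2 s"
  unfolding phi2_def by simp

lemma phi_resolve_diff:
  assumes "0 < pX s" "pX s < 1"
  shows "phi1 (resolve M m1 m2 s) - phi1 s \<in> \<int>" "phi2 (resolve M m1 m2 s) - phi2 s \<in> \<int>"
  using phi1_resolve_left_diff[of s] phi2_resolve_right_diff[of "resolve_left M m1 s"] assms
  unfolding resolve_eq_resolve_right_left by simp_all

lemma phi1_fly_increment:
  assumes "pX s \<noteq> 0" "pX s + pV s * t \<noteq> 0"
  shows "phi1 (fly s t) - phi1 s
       = t * (\<bar>pv1 s\<bar> * pX s - px1 s * (if pv1 s < 0 then - pV s else pV s))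
         / (2 * pX s * (pX s + pV s * t))"
proof -
  let ?inc = "(px1 s + pv1 s * t) / (2 * (pX s + pV s * t)) - px1 s / (2 * pX s)"
  have "phi1 (fly s t) - phi1 s = (if pv1 s < 0 then - ?inc else ?inc)"
    unfolding phi1_def by simp
  also have "\<dots> = (if pv1 s < 0 then -1 else 1)
      * (t * (pv1 s * pX s - px1 s * pV s) / (2 * pX s * (pX s + pV s * t)))"
    unfolding half_ratio_increment[OF assms] by simp
  also have "\<dots> = t * (\<bar>pv1 s\<bar> * pX s - px1 s * (if pv1 s < 0 then - pV s else pV s))
         / (2 * pX s * (pX s + pV s * t))"
    by (simp add: minus_divide_left[symmetric] algebra_simps)
  finally show ?thesis .
qed

lemma phi2_fly_increment:
  assumes "pX s \<noteq> 1" "pX s + pV s * t \<noteq> 1"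
  shows "phi2 (fly s t) - phi2 s
       = t * (\<bar>pv2 s\<bar> * (1 - pX s) - (1 - px2 s) * (if pv2 s < 0 then - pV s else pV s))
         / (2 * (1 - pX s) * (1 - (pX s + pV s * t)))"
proof -
  have ne: "1 - pX s \<noteq> 0" "(1 - pX s) + (- pV s) * t \<noteq> 0" using assms by auto
  let ?inc = "((1 - px2 s) + (- pv2 s) * t) / (2 * ((1 - pX s) + (- pV s) * t))
    - (1 - px2 s) / (2 * (1 - pX s))"
  have "phi2 (fly s t) - phi2 s = (if pv2 s < 0 then ?inc else - ?inc)"
    unfolding phi2_def by (simp add: algebra_simps)
  also have "\<dots> = (if pv2 s < 0 then 1 else -1)
      * (t * ((- pv2 s) * (1 - pX s) - (1 - px2 s) * (- pV s))
      / (2 * (1 - pX s) * ((1 - pX s) + (- pV s) * t)))"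
    unfolding half_ratio_increment[OF ne] by simp
  also have "\<dots> = t * (\<bar>pv2 s\<bar> * (1 - pX s) - (1 - px2 s) * (if pv2 s < 0 then - pV s else pV s))
         / (2 * (1 - pX s) * (1 - (pX s + pV s * t)))"
    by (simp add: minus_divide_left[symmetric] algebra_simps)
  finally show ?thesis .
qed

lemma px1_eq_0_if_phi1_Ints:
  assumes "ordered_config s" "0 < pX s" "phi1 s \<in> \<int>"
  shows "px1 s = 0"
proof -
  define r where "r = px1 s / (2 * pX s)"
  have r: "0 \<le> r" "r \<le> 1 / 2"
    using assms(1,2) unfolding ordered_config_def r_def by (auto simp: divide_le_eq)
  obtain n :: int where n: "phi1 s = of_int n" using assms(3) by (auto elim: Ints_cases)
  have "r = 0"
  proof (cases "pv1 s < 0")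
    case True
    then have "1 - r = of_int n" using n unfolding phi1_def r_def by simp
    with r have "n = 1" by linarith
    with \<open>1 - r = of_int n\<close> show ?thesis by simp
  next
    case False
    then have "r = of_int n" using n unfolding phi1_def r_def by simp
    with r have "n = 0" by linarith
    with \<open>r = of_int n\<close> show ?thesis by simp
  qed
  then show ?thesis using assms(2) unfolding r_def by simp
qed

lemma circ_dist_le: "n \<in> \<int> \<Longrightarrow> circ_dist a b \<le> \<bar>a - b - n\<bar>"
  unfolding circ_dist_def by (auto elim: Ints_cases intro: round_diff_minimal)

lemma circ_dist_add_le:
  assumes "n \<in> \<int>" "\<bar>a - b - n\<bar> \<le> e1" "\<bar>b' - b - r\<bar> \<le> e2"
  shows "circ_dist (a + r) b' \<le> e1 + e2"
proof -
  have "circ_dist (a + r) b' \<le> \<bar>(a - b - n) - (b' - b - r)\<bar>"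
    using circ_dist_le[OF assms(1), of "a + r" b'] by (simp add: algebra_simps)
  also have "\<dots> \<le> e1 + e2" using assms(2,3) abs_triangle_ineq4 by (meson add_mono order_trans)
  finally show ?thesis .
qed

lemma zdist_le:
  assumes "\<bar>X - X'\<bar> \<le> B" "\<bar>W - W'\<bar> \<le> B" "\<bar>s1 - s1'\<bar> \<le> B" "\<bar>s2 - s2'\<bar> \<le> B"
    "circ_dist p1 p1' \<le> B" "circ_dist p2 p2' \<le> B"
  shows "zdist (X, W, s1, s2, p1, p2) (X', W', s1', s2', p1', p2') \<le> B"
  unfolding zdist_def prod.case using assms by (intro Max.boundedI) auto

section \<open>Constants of the estimate\<close>

locale piston_constants =
  fixes m1 m2 a b c D Bm :: real
  assumes m1_pos: "0 < m1" and m2_pos: "0 < m2"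
    and a_pos: "0 < a" and b_lt_1: "b < 1" and c_pos: "0 < c"
begin

text \<open>The box is \<open>a \<le> X \<le> b\<close>, \<open>\<bar>W\<bar> \<le> Bm\<close>, \<open>c \<le> s\<^sub>i \<le> D\<close>; \<open>W_bound\<close> and
  \<open>v_bound\<close> use \<open>\<bar>x\<bar> \<le> 1 + x\<^sup>2\<close> instead of square roots.\<close>

definition "E_bound = Bm\<^sup>2 + (m1 + m2) * D\<^sup>2"
definition "W_bound = 1 + E_bound"
definition "v_bound = 1 + E_bound / m1 + E_bound / m2"
definition "speed_bound = v_bound + W_bound"
definition "T_return = 3 / c"
definition "right_margin = (1 - b) / 2"
definition "X_margin = min (a / 2) right_margin"
definition "right_transit_time = right_margin / speed_bound"
definition "momentum_rate = (m1 / (a / 2) + m2 / right_margin) * v_bound * speed_bound"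
definition "C_W = momentum_rate * T_return + 2 * (m1 + m2) * v_bound"
definition "C_v1 = 2 * m1 * v_bound + 2 * W_bound"
definition "C_v2 = (2 * C_W * W_bound + 2 * m1 * C_v1 * v_bound) / (m2 * c)"
definition "C_X = W_bound * T_return"
definition "C_phase =
  (C_v1 + C_v2) / (2 * X_margin) + v_bound * C_X / (2 * X_margin\<^sup>2) + W_bound / (2 * X_margin)"
definition "C_total = C_X + C_W + (C_v1 + C_v2) + C_phase * T_return"
definition "eps_max = Min {1, X_margin / (W_bound * T_return), c / (16 * W_bound),
  c / (2 * C_v1), c / (2 * C_v2), 1 / (2 * m2)}"

lemma E_bound_nonneg: "0 \<le> E_bound"
  unfolding E_bound_def using m1_pos m2_pos by simp

lemma W_bound_ge_1: "1 \<le> W_bound"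
  unfolding W_bound_def using E_bound_nonneg by simp

lemma v_bound_ge_1: "1 \<le> v_bound"
  unfolding v_bound_def using E_bound_nonneg m1_pos m2_pos by simp

lemma T_return_pos: "0 < T_return"
  unfolding T_return_def using c_pos by simp

lemma right_margin_pos: "0 < right_margin"
  unfolding right_margin_def using b_lt_1 by simp

lemma X_margin_pos: "0 < X_margin"
  unfolding X_margin_def using a_pos right_margin_pos by simp

lemma right_transit_time_pos: "0 < right_transit_time"
  unfolding right_transit_time_def speed_bound_def using right_margin_pos v_bound_ge_1 W_bound_ge_1
    by simp

lemma constants_pos: "0 < C_W" "0 < C_v1" "0 < C_v2" "0 < C_X" "0 \<le> C_phase" "0 < C_total"
proof -
  have "0 \<le> momentum_rate"
    unfolding momentum_rate_def speed_bound_def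
      using m1_pos m2_pos a_pos right_margin_pos v_bound_ge_1 W_bound_ge_1
    by simp
  then show W: "0 < C_W"
    unfolding C_W_def using T_return_pos m1_pos m2_pos v_bound_ge_1 by (simp add: add_nonneg_pos)
  show v1: "0 < C_v1" unfolding C_v1_def using m1_pos v_bound_ge_1 W_bound_ge_1
    by (simp add: add_nonneg_pos)
  show v2: "0 < C_v2" unfolding C_v2_def using W v1 m1_pos m2_pos c_pos v_bound_ge_1 W_bound_ge_1
    by (simp add: add_pos_nonneg)
  show X: "0 < C_X" unfolding C_X_def using W_bound_ge_1 T_return_pos by simp
  show p: "0 \<le> C_phase" unfolding C_phase_def using v1 v2 X X_margin_pos v_bound_ge_1 W_bound_ge_1
    by simp
  show "0 < C_total" unfolding C_total_def using W v1 v2 X p T_return_pos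
    by (simp add: add_pos_nonneg)
qed

lemma eps_max_pos: "0 < eps_max"
  unfolding eps_max_def using X_margin_pos W_bound_ge_1 T_return_pos c_pos constants_pos m2_pos
    by simp

end

section \<open>The orbit up to the first return of the left particle\<close>

locale piston_orbit = piston_constants +
  fixes eps :: real and s0 :: pst
  assumes eps_pos: "0 < eps" and eps_le_max: "eps \<le> eps_max"
    and ordered_s0: "ordered_config s0" and x1_s0: "px1 s0 = 0"
    and X_s0: "a \<le> pX s0" "pX s0 \<le> b" and W_s0: "\<bar>pV s0 / eps\<bar> \<le> Bm"
    and v1_s0: "c \<le> \<bar>pv1 s0\<bar>" "\<bar>pv1 s0\<bar> \<le> D" and v2_s0: "c \<le> \<bar>pv2 s0\<bar>" "\<bar>pv2 s0\<bar> \<le> D"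
begin

abbreviation "M \<equiv> 1 / eps\<^sup>2"
abbreviation "tt k \<equiv> fst (events M m1 m2 s0 k)"
abbreviation "SS k \<equiv> snd (events M m1 m2 s0 k)"
abbreviation "s1 \<equiv> \<bar>pv1 s0\<bar>"
abbreviation "s2 \<equiv> \<bar>pv2 s0\<bar>"
abbreviation "X0 \<equiv> pX s0"
abbreviation "E0 \<equiv> energy M m1 m2 s0"

lemma eps_small:
  shows "eps \<le> 1" "eps * W_bound * T_return \<le> X_margin" "eps * W_bound \<le> c / 16"
    "eps * C_v1 \<le> c / 2" "eps * C_v2 \<le> c / 2" "2 * m2 \<le> M"
proof -
  have le: "eps \<le> 1" "eps \<le> X_margin / (W_bound * T_return)" "eps \<le> c / (16 * W_bound)"
    "eps \<le> c / (2 * C_v1)" "eps \<le> c / (2 * C_v2)" "eps \<le> 1 / (2 * m2)"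
    using eps_le_max unfolding eps_max_def by simp_all
  show "eps \<le> 1" by (fact le(1))
  show "eps * W_bound * T_return \<le> X_margin"
    using le(2) W_bound_ge_1 T_return_pos by (simp add: le_divide_eq mult.assoc)
  show "eps * W_bound \<le> c / 16"
    using le(3) W_bound_ge_1 by (simp add: le_divide_eq mult.commute)
  show "eps * C_v1 \<le> c / 2"
    using le(4) constants_pos by (simp add: le_divide_eq mult.commute)
  show "eps * C_v2 \<le> c / 2"
    using le(5) constants_pos by (simp add: le_divide_eq mult.commute)
  have "eps\<^sup>2 \<le> eps" using le(1) eps_pos by (simp add: power2_eq_square mult_le_cancel_right1)
  also have "\<dots> \<le> 1 / (2 * m2)" by (fact le(6))
  finally show "2 * m2 \<le> M" using eps_pos m2_pos by (simp add: field_simps)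
qed

lemma M_pos: "0 < M"
  using eps_pos by simp

lemma mass_sums_nonzero: "m1 + M \<noteq> 0" "m2 + M \<noteq> 0"
  using M_pos m1_pos m2_pos by linarith+

lemma energy_scaled: "energy M m1 m2 s = (pV s / eps)\<^sup>2 + m1 * (pv1 s)\<^sup>2 + m2 * (pv2 s)\<^sup>2"
  unfolding energy_def by (simp add: power_divide)

lemma E0_le_E_bound: "E0 \<le> E_bound"
proof -
  have "(pV s0 / eps)\<^sup>2 \<le> Bm\<^sup>2" "(pv1 s0)\<^sup>2 \<le> D\<^sup>2" "(pv2 s0)\<^sup>2 \<le> D\<^sup>2"
    using power_mono[OF W_s0 abs_ge_zero, of 2] power_mono[OF v1_s0(2) abs_ge_zero, of 2]
      power_mono[OF v2_s0(2) abs_ge_zero, of 2]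
    by (simp_all only: power2_abs)
  moreover from this(2,3) have "m1 * (pv1 s0)\<^sup>2 \<le> m1 * D\<^sup>2" "m2 * (pv2 s0)\<^sup>2 \<le> m2 * D\<^sup>2"
    using m1_pos m2_pos by (simp_all add: mult_left_mono)
  ultimately show ?thesis
    unfolding energy_scaled E_bound_def distrib_right by linarith
qed

lemma energy_level_bounds:
  assumes "energy M m1 m2 s = E0"
  shows "\<bar>pV s / eps\<bar> \<le> W_bound" "\<bar>pV s\<bar> \<le> eps * W_bound" "\<bar>pv1 s\<bar> \<le> v_bound" "\<bar>pv2 s\<bar> \<le> v_bound"
proof -
  have E: "(pV s / eps)\<^sup>2 + m1 * (pv1 s)\<^sup>2 + m2 * (pv2 s)\<^sup>2 \<le> E_bound"
    using assms E0_le_E_bound energy_scaled by simp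
  have nonneg: "0 \<le> (pV s / eps)\<^sup>2" "0 \<le> m1 * (pv1 s)\<^sup>2" "0 \<le> m2 * (pv2 s)\<^sup>2"
    using m1_pos m2_pos by simp_all
  have "(pV s / eps)\<^sup>2 \<le> E_bound" using E nonneg by linarith
  then show W: "\<bar>pV s / eps\<bar> \<le> W_bound"
    unfolding W_bound_def by (rule abs_le_one_plus_if_power2_le)
  then show "\<bar>pV s\<bar> \<le> eps * W_bound"
    using eps_pos by (simp add: abs_divide divide_le_eq mult.commute)
  have "m1 * (pv1 s)\<^sup>2 \<le> E_bound" "m2 * (pv2 s)\<^sup>2 \<le> E_bound" using E nonneg by linarith+
  then have "(pv1 s)\<^sup>2 \<le> E_bound / m1" "(pv2 s)\<^sup>2 \<le> E_bound / m2"
    using m1_pos m2_pos by (simp_all add: le_divide_eq mult.commute)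
  then have "\<bar>pv1 s\<bar> \<le> 1 + E_bound / m1" "\<bar>pv2 s\<bar> \<le> 1 + E_bound / m2"
    by (simp_all add: abs_le_one_plus_if_power2_le)
  moreover have "0 \<le> E_bound / m1" "0 \<le> E_bound / m2"
    using E_bound_nonneg m1_pos m2_pos by simp_all
  ultimately show "\<bar>pv1 s\<bar> \<le> v_bound" "\<bar>pv2 s\<bar> \<le> v_bound"
    unfolding v_bound_def by linarith+
qed

lemma energy_SS: "energy M m1 m2 (SS k) = E0"
  using energy_events[OF mass_sums_nonzero] .

lemmas SS_bounds = energy_level_bounds[OF energy_SS]

lemma ordered_SS: "ordered_config (SS k)"
  using ordered_config_events[OF ordered_s0] .

lemma tt_nonneg: "0 \<le> tt k"
  using events_time_nonneg[OF ordered_s0] .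

lemma s_le_v_bound: "s1 \<le> v_bound" "s2 \<le> v_bound"
  using energy_level_bounds[of s0] by simp_all

lemma X_drift: "\<bar>pX (SS k) - X0\<bar> \<le> eps * W_bound * tt k"
proof (induction k)
  case (Suc k)
  show ?case
  proof (cases "next_delay (SS k)")
    case None
    then show ?thesis using Suc by (simp add: events_Suc_None)
  next
    case (Some d)
    have "\<bar>pV (SS k) * d\<bar> \<le> eps * W_bound * d"
      using SS_bounds(2) next_delay_nonneg[OF ordered_SS Some]
        by (simp add: abs_mult mult_right_mono)
    then show ?thesis using events_Suc_Some[OF Some] Suc by (simp add: algebra_simps)
  qed
qed simp

definition X_range :: "real \<Rightarrow> bool" where
  "X_range x \<longleftrightarrow> a / 2 \<le> x \<and> x \<le> 1 - right_margin"

lemma X_range_if_close: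
  assumes "\<bar>x - X0\<bar> \<le> eps * W_bound * T_return"
  shows "X_range x"
proof -
  have "eps * W_bound * T_return \<le> a / 2" "eps * W_bound * T_return \<le> right_margin"
    using eps_small(2) unfolding X_margin_def by auto
  moreover have "b = 1 - 2 * right_margin" unfolding right_margin_def by (simp add: field_simps)
  ultimately show ?thesis
    using assms X_s0 unfolding X_range_def abs_le_iff by auto
qed

lemma X_range_D:
  "X_range x \<Longrightarrow> 0 < x \<and> x < 1 \<and> X_margin \<le> x \<and> X_margin \<le> 1 - x \<and> right_margin \<le> 1 - x"
  unfolding X_range_def X_margin_def using a_pos right_margin_pos by auto

lemma X_range_SS: "tt k \<le> T_return \<Longrightarrow> X_range (pX (SS k))"
  using X_drift[of k] eps_pos W_bound_ge_1
  by (intro X_range_if_close) (smt (verit) mult_left_mono mult_nonneg_nonneg)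

lemma V_le_W_bound:
  assumes "energy M m1 m2 s = E0"
  shows "\<bar>pV s\<bar> \<le> W_bound"
proof -
  have "eps * W_bound \<le> 1 * W_bound"
    using eps_small(1) W_bound_ge_1 by (intro mult_right_mono) auto
  then show ?thesis using energy_level_bounds(2)[OF assms] by simp
qed

lemma weighted_momentum_fly_drift:
  assumes "ordered_config s" "X_range (pX s)" "X_range (pX s + pV s * d)" "0 \<le> d"
    and "energy M m1 m2 s = E0"
  shows "\<bar>weighted_momentum M m1 m2 (fly s d) - weighted_momentum M m1 m2 s\<bar> \<le> momentum_rate * d"
proof -
  have V: "\<bar>pV s\<bar> \<le> W_bound" and v: "\<bar>pv1 s\<bar> \<le> v_bound" "\<bar>pv2 s\<bar> \<le> v_bound"
    using V_le_W_bound energy_level_bounds assms(5) by auto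
  have o: "0 \<le> px1 s" "px1 s \<le> pX s" "pX s \<le> px2 s" "px2 s \<le> 1"
    using assms(1) unfolding ordered_config_def by auto
  have X: "0 < pX s" "pX s < 1" "a / 2 \<le> pX s + pV s * d" "right_margin \<le> 1 - (pX s + pV s * d)"
    using assms(2,3) X_range_D unfolding X_range_def by auto
  define A1 where "A1 = (px1 s + pv1 s * d) / (pX s + pV s * d) - px1 s / pX s"
  define A2 where
    "A2 = ((1 - px2 s) + (- pv2 s) * d) / ((1 - pX s) + (- pV s) * d) - (1 - px2 s) / (1 - pX s)"
  have "\<bar>A1\<bar> \<le> d * (v_bound + W_bound) / (a / 2)"
    unfolding A1_def using X o v V assms(4) a_pos by (intro ratio_increment_bound) auto
  then have "\<bar>m1 * pv1 s * A1\<bar> \<le> m1 * v_bound * (d * (v_bound + W_bound) / (a / 2))"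
    unfolding abs_mult using m1_pos v by (intro mult_mono) auto
  moreover have "\<bar>A2\<bar> \<le> d * (v_bound + W_bound) / right_margin"
    unfolding A2_def using X o v V assms(4) right_margin_pos by (intro ratio_increment_bound) auto
  then have "\<bar>m2 * pv2 s * A2\<bar> \<le> m2 * v_bound * (d * (v_bound + W_bound) / right_margin)"
    unfolding abs_mult using m2_pos v by (intro mult_mono) auto
  moreover have "weighted_momentum M m1 m2 (fly s d) - weighted_momentum M m1 m2 s
      = m1 * pv1 s * A1 + m2 * pv2 s * A2"
    unfolding weighted_momentum_def A1_def A2_def by (simp add: algebra_simps)
  moreover have "m1 * v_bound * (d * (v_bound + W_bound) / (a / 2))
      + m2 * v_bound * (d * (v_bound + W_bound) / right_margin) = momentum_rate * d"
    unfolding momentum_rate_def speed_bound_def by (simp add: field_simps)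
  ultimately show ?thesis by linarith
qed

lemma weighted_momentum_drift:
  "tt k \<le> T_return \<Longrightarrow>
    \<bar>weighted_momentum M m1 m2 (SS k) - weighted_momentum M m1 m2 s0\<bar> \<le> momentum_rate * tt k"
proof (induction k)
  case (Suc k)
  show ?case
  proof (cases "next_delay (SS k)")
    case None
    then show ?thesis using Suc by (simp add: events_Suc_None)
  next
    case (Some d)
    note step = events_Suc_Some[OF Some]
    have d: "0 \<le> d" using next_delay_nonneg[OF ordered_SS Some] .
    then have tk: "tt k \<le> T_return" using Suc.prems step by simp
    have range: "X_range (pX (SS k))" "X_range (pX (SS k) + pV (SS k) * d)"
      using X_range_SS[OF tk] X_range_SS[OF Suc.prems] step by simp_all
    have "weighted_momentum M m1 m2 (SS (Suc k)) = weighted_momentum M m1 m2 (fly (SS k) d)"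
      using step weighted_momentum_resolve[OF mass_sums_nonzero] X_range_D[OF range(2)] by simp
    then show ?thesis
      using weighted_momentum_fly_drift[OF ordered_SS range d energy_SS] Suc.IH[OF tk] step
      by (simp add: algebra_simps)
  qed
qed simp

lemma W_eq_weighted_momentum:
  "pV s / eps = eps * (weighted_momentum M m1 m2 s
     - m1 * pv1 s * (px1 s / pX s) - m2 * pv2 s * ((1 - px2 s) / (1 - pX s)))"
  unfolding weighted_momentum_def using eps_pos by (simp add: field_simps power2_eq_square)

lemma weight_terms_bound:
  assumes "ordered_config s" "0 < pX s" "pX s < 1" "energy M m1 m2 s = E0"
  shows "\<bar>m1 * pv1 s * (px1 s / pX s)\<bar> \<le> m1 * v_bound"
    "\<bar>m2 * pv2 s * ((1 - px2 s) / (1 - pX s))\<bar> \<le> m2 * v_bound"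
proof -
  define q1 where "q1 = px1 s / pX s"
  define q2 where "q2 = (1 - px2 s) / (1 - pX s)"
  have "\<bar>q1\<bar> \<le> 1" "\<bar>q2\<bar> \<le> 1"
    using assms(1-3) unfolding ordered_config_def q1_def q2_def
      by (auto simp: abs_divide divide_le_eq_1)
  then have "\<bar>pv1 s\<bar> * \<bar>q1\<bar> \<le> v_bound * 1" "\<bar>pv2 s\<bar> * \<bar>q2\<bar> \<le> v_bound * 1"
    using energy_level_bounds(3,4)[OF assms(4)] v_bound_ge_1
    by (intro mult_mono; simp)+
  then show "\<bar>m1 * pv1 s * (px1 s / pX s)\<bar> \<le> m1 * v_bound"
    "\<bar>m2 * pv2 s * ((1 - px2 s) / (1 - pX s))\<bar> \<le> m2 * v_bound"
    unfolding q1_def[symmetric] q2_def[symmetric] abs_mult using m1_pos m2_pos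
    by (simp_all add: mult.assoc)
qed

lemma W_deviation:
  assumes "tt k \<le> T_return"
  shows "\<bar>pV (SS k) / eps - pV s0 / eps\<bar> \<le> C_W * eps"
proof -
  have X: "0 < pX (SS k)" "pX (SS k) < 1" "0 < X0" "X0 < 1"
    using X_range_D[OF X_range_SS[OF assms]] X_range_D[OF X_range_if_close]
      eps_pos W_bound_ge_1 T_return_pos
    by auto
  have "momentum_rate * tt k \<le> momentum_rate * T_return"
    using assms unfolding momentum_rate_def speed_bound_def
    using m1_pos m2_pos a_pos right_margin_pos v_bound_ge_1 W_bound_ge_1
      by (intro mult_left_mono) auto
  then have "\<bar>weighted_momentum M m1 m2 (SS k) - weighted_momentum M m1 m2 s0\<bar>
      \<le> momentum_rate * T_return"
    using weighted_momentum_drift[OF assms] by linarith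
  then have "\<bar>(weighted_momentum M m1 m2 (SS k) - m1 * pv1 (SS k) * (px1 (SS k) / pX (SS k))
      - m2 * pv2 (SS k) * ((1 - px2 (SS k)) / (1 - pX (SS k))))
      - (weighted_momentum M m1 m2 s0 - m1 * pv1 s0 * (px1 s0 / X0)
      - m2 * pv2 s0 * ((1 - px2 s0) / (1 - X0)))\<bar> \<le> C_W"
    using weight_terms_bound[OF ordered_SS X(1,2) energy_SS]
      weight_terms_bound[OF ordered_s0 X(3,4) refl]
    unfolding C_W_def abs_le_iff by (simp add: algebra_simps)
  then show ?thesis
    unfolding W_eq_weighted_momentum[of "SS k"] W_eq_weighted_momentum[of s0]
    using eps_pos by (simp add: right_diff_distrib[symmetric] abs_mult mult.commute)
qed

lemma v2_deviation:
  assumes "tt k \<le> T_return" "\<bar>\<bar>pv1 (SS k)\<bar> - s1\<bar> \<le> C_v1 * eps"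
  shows "\<bar>\<bar>pv2 (SS k)\<bar> - s2\<bar> \<le> C_v2 * eps"
proof -
  have "(pV (SS k) / eps)\<^sup>2 + m1 * (pv1 (SS k))\<^sup>2 + m2 * (pv2 (SS k))\<^sup>2
      = (pV s0 / eps)\<^sup>2 + m1 * (pv1 s0)\<^sup>2 + m2 * (pv2 s0)\<^sup>2"
    using energy_SS[of k] unfolding energy_scaled .
  from speed_deviation_from_energy[OF this W_deviation[OF assms(1)] SS_bounds(1)
      energy_level_bounds(1)[OF refl] assms(2) SS_bounds(3) energy_level_bounds(3)[OF refl]
      v2_s0(1) m1_pos m2_pos c_pos]
  show ?thesis unfolding C_v2_def .
qed

lemma V_small: "energy M m1 m2 s = E0 \<Longrightarrow> \<bar>pV s\<bar> \<le> c / 16"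
  using energy_level_bounds(2) eps_small(3) by fastforce

lemma slow_regime:
  assumes "tt k \<le> T_return" "\<bar>\<bar>pv1 (SS k)\<bar> - s1\<bar> \<le> C_v1 * eps"
  shows "c / 2 \<le> \<bar>pv1 (SS k)\<bar>" "c / 2 \<le> \<bar>pv2 (SS k)\<bar>"
  using assms(2) v2_deviation[OF assms] eps_small(4,5) v1_s0(1) v2_s0(1)
  unfolding abs_le_iff by (simp_all add: mult.commute)

definition right_gap :: "pst \<Rightarrow> real" where
  "right_gap s = (if pv2 s < 0 then px2 s - pX s else 1 - px2 s)"

lemma right_gap_resolve_left [simp]: "right_gap (resolve_left M' m s) = right_gap s"
  unfolding right_gap_def by simp

lemma right_gap_nonneg: "ordered_config s \<Longrightarrow> 0 \<le> right_gap s"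
  unfolding right_gap_def ordered_config_def by auto

lemma right_gap_fly:
  assumes "\<bar>pV S\<bar> \<le> c / 16" "c / 2 \<le> \<bar>pv2 S\<bar>" "energy M m1 m2 S = E0" "0 \<le> d"
  shows "right_gap S - speed_bound * d \<le> right_gap (fly S d)"
    and "(pv2 S < pV S \<and> px2 (fly S d) = pX (fly S d)) \<or> (0 < pv2 S \<and> px2 (fly S d) = 1)
      \<Longrightarrow> right_gap (fly S d) = 0"
proof -
  have "\<bar>pV S\<bar> \<le> W_bound" "\<bar>pv2 S\<bar> \<le> v_bound"
    using V_le_W_bound energy_level_bounds(4) assms(3) by auto
  then have "\<bar>pV S - pv2 S\<bar> * d \<le> speed_bound * d" "\<bar>pv2 S\<bar> * d \<le> speed_bound * d"
    unfolding speed_bound_def using assms(4) by (auto intro!: mult_right_mono)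
  then show "right_gap S - speed_bound * d \<le> right_gap (fly S d)"
    using assms(1,2) c_pos unfolding right_gap_def abs_le_iff by (auto simp: algebra_simps)
  show "(pv2 S < pV S \<and> px2 (fly S d) = pX (fly S d)) \<or> (0 < pv2 S \<and> px2 (fly S d) = 1)
      \<Longrightarrow> right_gap (fly S d) = 0"
    using assms(1,2) c_pos unfolding right_gap_def by auto
qed

lemma right_gap_resolve_right:
  assumes "\<bar>pV u\<bar> \<le> c / 16" "c / 2 \<le> \<bar>pv2 u\<bar>" "right_margin \<le> 1 - pX u"
  shows "right_gap u = 0 \<Longrightarrow> right_margin \<le> right_gap (resolve_right M m2 u)"
    and "right_gap u \<noteq> 0 \<Longrightarrow> right_gap (resolve_right M m2 u) = right_gap u"
proof -
  consider "pv2 u \<le> - c / 2" | "c / 2 \<le> pv2 u" using assms(2) by linarith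
  then have "(right_gap u = 0 \<longrightarrow> right_margin \<le> right_gap (resolve_right M m2 u))
      \<and> (right_gap u \<noteq> 0 \<longrightarrow> right_gap (resolve_right M m2 u) = right_gap u)"
  proof cases
    case 1
    then have "pv2 u < 0" "pv2 u < pV u" using assms(1) c_pos by auto
    moreover have "0 < pv2 (collide_right M m2 u)"
      using heavy_collision_reverses[OF eps_small(6) m2_pos 1 assms(1) c_pos] by simp
    ultimately show ?thesis
      using assms(3) unfolding right_gap_def resolve_right_def by auto
  next
    case 2
    then have "0 < pv2 u" "\<not> pv2 u < pV u" using assms(1) c_pos by auto
    then show ?thesis
      using assms(3) right_margin_pos unfolding right_gap_def resolve_right_def by auto
  qed
  then show "right_gap u = 0 \<Longrightarrow> right_margin \<le> right_gap (resolve_right M m2 u)"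
    and "right_gap u \<noteq> 0 \<Longrightarrow> right_gap (resolve_right M m2 u) = right_gap u" by blast+
qed

lemma SS_Suc:
  assumes "next_delay (SS k) = Some d"
  shows "tt (Suc k) = tt k + d" "SS (Suc k) = resolve_right M m2 (resolve_left M m1 (fly (SS k) d))"
  using events_Suc_Some[OF assms] resolve_eq_resolve_right_left by simp_all

lemma right_gap_Suc:
  assumes nd: "next_delay (SS k) = Some d" and T: "tt (Suc k) \<le> T_return"
    and v2: "c / 2 \<le> \<bar>pv2 (SS k)\<bar>"
  shows "right_gap (fly (SS k) d) = 0 \<Longrightarrow> right_margin \<le> right_gap (SS (Suc k))"
    and "right_gap (fly (SS k) d) \<noteq> 0 \<Longrightarrow> right_gap (SS (Suc k)) = right_gap (fly (SS k) d)"
proof -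
  define u where "u = resolve_left M m1 (fly (SS k) d)"
  have "energy M m1 m2 u = E0"
    unfolding u_def using energy_resolve_left[OF mass_sums_nonzero(1)] energy_SS by simp
  then have "\<bar>pV u\<bar> \<le> c / 16" by (rule V_small)
  moreover have "right_margin \<le> 1 - pX u"
    using X_range_D[OF X_range_SS[OF T]] SS_Suc[OF nd] unfolding u_def by simp
  moreover have "c / 2 \<le> \<bar>pv2 u\<bar>" "right_gap u = right_gap (fly (SS k) d)"
    using v2 unfolding u_def by simp_all
  ultimately show "right_gap (fly (SS k) d) = 0 \<Longrightarrow> right_margin \<le> right_gap (SS (Suc k))"
    and "right_gap (fly (SS k) d) \<noteq> 0 \<Longrightarrow> right_gap (SS (Suc k)) = right_gap (fly (SS k) d)"
    using right_gap_resolve_right[of u] SS_Suc(2)[OF nd] unfolding u_def by auto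
qed

text \<open>\<open>N\<close> bounds the collisions of the right particle among the first \<open>k\<close> events, the
  last of them at time \<open>l\<close>, and \<open>p\<close> the events of the left particle.  A collision leaves a
  right gap of at least \<open>right_margin\<close>, which closes at speed at most \<open>speed_bound\<close>, so
  consecutive collisions of the right particle are \<open>right_transit_time\<close> apart.\<close>

definition collision_count_bound :: "nat \<Rightarrow> real \<Rightarrow> bool" where
  "collision_count_bound k p \<longleftrightarrow> (\<exists>N::nat. \<exists>l. real k \<le> real N + p
     \<and> right_transit_time * (real N - 1) \<le> l \<and> l \<le> tt k
     \<and> right_margin \<le> right_gap (SS k) + speed_bound * (tt k - l))"

lemma collision_count_bound_0: "0 \<le> p \<Longrightarrow> collision_count_bound 0 p"
  unfolding collision_count_bound_def right_transit_time_def
  using right_gap_nonneg[OF ordered_s0] right_margin_pos speed_bound_def v_bound_ge_1 W_bound_ge_1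
  by (intro exI[of _ "0::nat"] exI[of _ "- right_margin / speed_bound"]) (auto simp: field_simps)

lemma collision_count_bound_Suc:
  assumes nd: "next_delay (SS k) = Some d" and T: "tt (Suc k) \<le> T_return"
    and v2: "c / 2 \<le> \<bar>pv2 (SS k)\<bar>"
    and count: "collision_count_bound k p" and "p \<le> p'"
    and left_or_right: "p + 1 \<le> p' \<or> right_gap (fly (SS k) d) = 0"
  shows "collision_count_bound (Suc k) p'"
proof -
  obtain N l where N: "real k \<le> real N + p" "right_transit_time * (real N - 1) \<le> l" "l \<le> tt k"
      "right_margin \<le> right_gap (SS k) + speed_bound * (tt k - l)"
    using count unfolding collision_count_bound_def by blast
  have d: "0 \<le> d" using next_delay_nonneg[OF ordered_SS nd] .
  have gap: "right_gap (SS k) - speed_bound * d \<le> right_gap (fly (SS k) d)"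
    using right_gap_fly(1)[OF V_small[OF energy_SS] v2 energy_SS d] .
  show ?thesis
  proof (cases "right_gap (fly (SS k) d) = 0")
    case True
    then have "right_margin \<le> speed_bound * (tt k + d - l)" using N(4) gap
      by (simp add: algebra_simps)
    then have "right_transit_time \<le> tt k + d - l"
      unfolding right_transit_time_def speed_bound_def using v_bound_ge_1 W_bound_ge_1
      by (simp add: divide_le_eq mult.commute)
    then have "right_transit_time * (real (Suc N) - 1) \<le> tt (Suc k)"
      using N(2) SS_Suc(1)[OF nd] by (simp add: algebra_simps)
    moreover have "real (Suc k) \<le> real (Suc N) + p'" using N(1) \<open>p \<le> p'\<close> by simp
    ultimately show ?thesis
      unfolding collision_count_bound_def using right_gap_Suc(1)[OF nd T v2 True]
      by (intro exI[of _ "Suc N"] exI[of _ "tt (Suc k)"]) simp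
  next
    case False
    then have "right_gap (SS (Suc k)) = right_gap (fly (SS k) d)" "p + 1 \<le> p'"
      using right_gap_Suc(2)[OF nd T v2] left_or_right by auto
    then show ?thesis
      unfolding collision_count_bound_def using N gap SS_Suc(1)[OF nd] d
      by (intro exI[of _ N] exI[of _ l]) (auto simp: algebra_simps)
  qed
qed

definition returns_at :: "nat \<Rightarrow> bool" where
  "returns_at k \<longleftrightarrow> pv1 (SS k) < 0 \<and> 0 < px1 (SS k)
     \<and> (\<exists>d. next_delay (SS k) = Some d \<and> px1 (SS k) + pv1 (SS k) * d = 0)"

text \<open>The stages of the left particle: \<open>at_start\<close> (only when it starts at the wall with
  negative velocity), \<open>outbound\<close> towards the piston, \<open>inbound\<close> back to the wall.  The
  budget \<open>px1 + c/2 * tt k \<le> 3/2\<close> forces the return before \<open>T_return = 3/c\<close>.\<close>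

definition at_start :: "nat \<Rightarrow> bool" where
  "at_start k \<longleftrightarrow> k = 0 \<and> px1 (SS k) = 0 \<and> pv1 (SS k) = - s1"

definition outbound :: "nat \<Rightarrow> bool" where
  "outbound k \<longleftrightarrow> pv1 (SS k) = s1 \<and> px1 (SS k) = s1 * tt k"

definition inbound :: "nat \<Rightarrow> bool" where
  "inbound k \<longleftrightarrow> pv1 (SS k) < 0 \<and> \<bar>pv1 (SS k) + s1\<bar> \<le> C_v1 * eps \<and> 0 < px1 (SS k)
     \<and> px1 (SS k) + c / 2 * tt k \<le> 3 / 2"

definition orbit_inv :: "nat \<Rightarrow> bool" where
  "orbit_inv k \<longleftrightarrow> (at_start k \<and> collision_count_bound k 0) \<or> (outbound k \<and> collision_count_bound k 1)
     \<or> (inbound k \<and> collision_count_bound k 2)"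

lemma stage_bounds:
  assumes "at_start k \<or> outbound k \<or> inbound k"
  shows "tt k \<le> T_return" "\<bar>\<bar>pv1 (SS k)\<bar> - s1\<bar> \<le> C_v1 * eps"
proof -
  have x1: "px1 (SS k) \<le> 1" using ordered_SS[of k] unfolding ordered_config_def by linarith
  have "c * tt k \<le> s1 * tt k" using v1_s0(1) tt_nonneg by (intro mult_right_mono) auto
  then have "tt k \<le> T_return \<and> \<bar>\<bar>pv1 (SS k)\<bar> - s1\<bar> \<le> C_v1 * eps"
    using assms x1 c_pos eps_pos constants_pos T_return_pos
    unfolding at_start_def outbound_def inbound_def T_return_def
    by (auto simp: le_divide_eq mult.commute)
  then show "tt k \<le> T_return" "\<bar>\<bar>pv1 (SS k)\<bar> - s1\<bar> \<le> C_v1 * eps" by auto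
qed

lemma orbit_inv_stage: "orbit_inv k \<Longrightarrow> at_start k \<or> outbound k \<or> inbound k"
  unfolding orbit_inv_def by blast

lemma left_reflection_error:
  assumes "energy M m1 m2 S = E0"
  shows "\<bar>((m1 - M) * s1 + 2 * M * pV S) / (m1 + M) + s1\<bar> \<le> C_v1 * eps"
proof -
  have "eps\<^sup>2 \<le> eps" using eps_pos eps_small(1)
    by (simp add: power2_eq_square mult_le_cancel_right1)
  then have "s1 * eps\<^sup>2 \<le> v_bound * eps" using s_le_v_bound(1) eps_pos by (intro mult_mono) auto
  then have "2 * m1 * s1 / M \<le> 2 * m1 * v_bound * eps" using m1_pos by (simp add: mult.assoc)
  moreover have "2 * \<bar>pV S\<bar> \<le> 2 * (eps * W_bound)" using energy_level_bounds(2)[OF assms] by simp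
  ultimately show ?thesis
    using heavy_collision_reflection_error[OF M_pos m1_pos, of s1 "pV S"] unfolding C_v1_def
    by (simp add: algebra_simps)
qed

lemma at_start_step:
  assumes "at_start k" "collision_count_bound k 0"
  shows "outbound (Suc k) \<and> collision_count_bound (Suc k) 1"
proof -
  have k: "k = 0" "px1 (SS k) = 0" "pv1 (SS k) = - s1" using assms(1) unfolding at_start_def by auto
  then have neg: "pv1 (SS k) < 0" using v1_s0(1) c_pos by simp
  obtain d where nd: "next_delay (SS k) = Some d" using next_delay_exists neg by blast
  have "0 \<le> pv1 (SS k) * d" using next_delay_no_overshoot(1)[OF nd neg] k by simp
  then have d: "d = 0" using next_delay_nonneg[OF ordered_SS nd] neg by (simp add: zero_le_mult_iff)
  have wall: "resolve_left M m1 (SS k) = (SS k)\<lparr>pv1 := - pv1 (SS k)\<rparr>"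
    unfolding resolve_left_def using k neg by simp
  have "outbound (Suc k)"
    unfolding outbound_def using SS_Suc[OF nd] d wall k by (simp add: fly_def)
  moreover have "tt k \<le> T_return" "\<bar>\<bar>pv1 (SS k)\<bar> - s1\<bar> \<le> C_v1 * eps"
    using stage_bounds assms(1) by auto
  then have "collision_count_bound (Suc k) 1"
    using SS_Suc(1)[OF nd] d slow_regime(2) assms(2)
    by (intro collision_count_bound_Suc[OF nd]) auto
  ultimately show ?thesis by simp
qed

lemma outbound_step:
  assumes "outbound k" "collision_count_bound k 1"
  shows "(outbound (Suc k) \<and> collision_count_bound (Suc k) 1)
    \<or> (inbound (Suc k) \<and> collision_count_bound (Suc k) 2)"
proof -
  have v: "pv1 (SS k) = s1" and x: "px1 (SS k) = s1 * tt k" using assms(1) unfolding outbound_def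
    by auto
  have bounds: "tt k \<le> T_return" "\<bar>\<bar>pv1 (SS k)\<bar> - s1\<bar> \<le> C_v1 * eps" using stage_bounds assms(1)
    by auto
  have V: "\<bar>pV (SS k)\<bar> \<le> c / 16" using V_small[OF energy_SS] .
  have v2: "c / 2 \<le> \<bar>pv2 (SS k)\<bar>" using slow_regime(2)[OF bounds] .
  have vV: "pV (SS k) < pv1 (SS k)" using v V v1_s0(1) c_pos by auto
  obtain d where nd: "next_delay (SS k) = Some d" using next_delay_exists vV by blast
  let ?F = "fly (SS k) d"
  have x': "px1 ?F = s1 * tt (Suc k)" using x v SS_Suc(1)[OF nd] by (simp add: algebra_simps)
  have F: "px1 ?F \<le> pX ?F" "pX ?F \<le> 1"
    using ordered_config_fly[OF ordered_SS nd] unfolding ordered_config_def by linarith+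
  have "c * tt (Suc k) \<le> s1 * tt (Suc k)" using v1_s0(1) tt_nonneg by (intro mult_right_mono) auto
  then have ct: "c * tt (Suc k) \<le> 1" using x' F by linarith
  then have t1: "tt (Suc k) \<le> 1 / c" using c_pos by (simp add: le_divide_eq mult.commute)
  moreover have "1 / c \<le> 3 / c" using c_pos by (simp add: divide_right_mono)
  ultimately have T: "tt (Suc k) \<le> T_return" unfolding T_return_def by linarith
  have X_pos: "0 < pX ?F" using X_range_D[OF X_range_SS[OF T]] SS_Suc(2)[OF nd] by simp
  show ?thesis
  proof (cases "px1 ?F = pX ?F")
    case True
    have hit: "resolve_left M m1 ?F = collide_left M m1 ?F"
      unfolding resolve_left_def using True X_pos vV by simp
    define v' where "v' = ((m1 - M) * s1 + 2 * M * pV (SS k)) / (m1 + M)"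
    have pv: "pv1 (SS (Suc k)) = v'" unfolding SS_Suc(2)[OF nd] hit v'_def using v by simp
    have err: "\<bar>v' + s1\<bar> \<le> C_v1 * eps" unfolding v'_def using left_reflection_error[OF energy_SS] .
    then have "v' < 0" using eps_small(4) v1_s0(1) c_pos unfolding abs_le_iff
      by (simp add: mult.commute)
    moreover have "c / 2 * tt (Suc k) \<le> 1 / 2" using ct by simp
    ultimately have "inbound (Suc k)"
      unfolding inbound_def using pv err True X_pos F SS_Suc(2)[OF nd] by simp
    moreover have "collision_count_bound (Suc k) 2"
      using assms(2) by (intro collision_count_bound_Suc[OF nd T v2]) auto
    ultimately show ?thesis by simp
  next
    case False
    have "resolve_left M m1 ?F = ?F" unfolding resolve_left_def using False v v1_s0(1) c_pos by auto
    then have "outbound (Suc k)" unfolding outbound_def using SS_Suc(2)[OF nd] v x' by simp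
    moreover have "(pv2 (SS k) < pV (SS k) \<and> px2 ?F = pX ?F) \<or> (0 < pv2 (SS k) \<and> px2 ?F = 1)"
      using next_delay_hits[OF nd] False v v1_s0(1) c_pos by auto
    then have "right_gap ?F = 0"
      by (rule right_gap_fly(2)[OF V v2 energy_SS next_delay_nonneg[OF ordered_SS nd]])
    then have "collision_count_bound (Suc k) 1"
      using assms(2) by (intro collision_count_bound_Suc[OF nd T v2]) auto
    ultimately show ?thesis by simp
  qed
qed

lemma inbound_step:
  assumes "inbound k" "collision_count_bound k 2" "\<not> returns_at k"
  shows "inbound (Suc k) \<and> collision_count_bound (Suc k) 2"
proof -
  have v: "pv1 (SS k) < 0" "\<bar>pv1 (SS k) + s1\<bar> \<le> C_v1 * eps" and x: "0 < px1 (SS k)"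
    and xt: "px1 (SS k) + c / 2 * tt k \<le> 3 / 2" using assms(1) unfolding inbound_def by auto
  have bounds: "tt k \<le> T_return" "\<bar>\<bar>pv1 (SS k)\<bar> - s1\<bar> \<le> C_v1 * eps" using stage_bounds assms(1)
    by auto
  have V: "\<bar>pV (SS k)\<bar> \<le> c / 16" using V_small[OF energy_SS] .
  have v2: "c / 2 \<le> \<bar>pv2 (SS k)\<bar>" using slow_regime(2)[OF bounds] .
  have vc: "pv1 (SS k) \<le> - c / 2" using v eps_small(4) v1_s0(1) unfolding abs_le_iff
    by (simp add: mult.commute)
  obtain d where nd: "next_delay (SS k) = Some d" using next_delay_exists v(1) by blast
  let ?F = "fly (SS k) d"
  have d: "0 \<le> d" using next_delay_nonneg[OF ordered_SS nd] .
  have "px1 ?F \<noteq> 0" using assms(3) v(1) x nd unfolding returns_at_def by auto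
  then have x': "0 < px1 ?F" using next_delay_no_overshoot(1)[OF nd v(1)] by simp
  have "resolve_left M m1 ?F = ?F" unfolding resolve_left_def using x' vc V c_pos by auto
  then have next_left: "pv1 (SS (Suc k)) = pv1 (SS k)" "px1 (SS (Suc k)) = px1 ?F"
    using SS_Suc(2)[OF nd] by simp_all
  have "pv1 (SS k) * d \<le> - c / 2 * d" using vc d by (rule mult_right_mono)
  then have xt': "px1 (SS (Suc k)) + c / 2 * tt (Suc k) \<le> 3 / 2"
    using next_left(2) SS_Suc(1)[OF nd] xt by (simp add: algebra_simps)
  then have "inbound (Suc k)" unfolding inbound_def using next_left v x' by simp
  moreover have "c / 2 * tt (Suc k) \<le> 3 / 2" using xt' x' next_left(2) by linarith
  then have T: "tt (Suc k) \<le> T_return" unfolding T_return_def using c_pos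
    by (simp add: le_divide_eq mult.commute)
  have "(pv2 (SS k) < pV (SS k) \<and> px2 ?F = pX ?F) \<or> (0 < pv2 (SS k) \<and> px2 ?F = 1)"
    using next_delay_hits[OF nd] x' vc V c_pos by auto
  then have "right_gap ?F = 0" by (rule right_gap_fly(2)[OF V v2 energy_SS d])
  then have "collision_count_bound (Suc k) 2"
    using assms(2) by (intro collision_count_bound_Suc[OF nd T v2]) auto
  ultimately show ?thesis by simp
qed

lemma orbit_inv_Suc: "orbit_inv k \<Longrightarrow> \<not> returns_at k \<Longrightarrow> orbit_inv (Suc k)"
  unfolding orbit_inv_def using at_start_step outbound_step inbound_step by blast

lemma orbit_inv_0: "orbit_inv 0"
  using collision_count_bound_0 x1_s0 unfolding orbit_inv_def at_start_def outbound_def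
  by (cases "pv1 s0 < 0") auto

lemma orbit_inv_before_return: "(\<And>j. j < k \<Longrightarrow> \<not> returns_at j) \<Longrightarrow> orbit_inv k"
  by (induction k) (simp_all add: orbit_inv_0 orbit_inv_Suc)

lemma orbit_inv_next_delay:
  assumes "orbit_inv k"
  obtains d where "next_delay (SS k) = Some d"
proof -
  have "\<bar>pV (SS k)\<bar> \<le> c / 16" using V_small[OF energy_SS] .
  then have "pv1 (SS k) < 0 \<or> pV (SS k) < pv1 (SS k)"
    using orbit_inv_stage[OF assms] v1_s0(1) c_pos unfolding at_start_def outbound_def inbound_def
      by auto
  then show ?thesis using next_delay_exists that by blast
qed

lemma orbit_inv_index_bound:
  assumes "orbit_inv k"
  shows "real k \<le> T_return / right_transit_time + 3"
proof -
  obtain p :: real where p: "p \<le> 2" "collision_count_bound k p"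
    using assms unfolding orbit_inv_def by (elim disjE conjE) (rule that; simp)+
  then obtain N l where N: "real k \<le> real N + p" "right_transit_time * (real N - 1) \<le> l" "l \<le> tt k"
    unfolding collision_count_bound_def by blast
  have "right_transit_time * (real N - 1) \<le> T_return"
    using N stage_bounds(1)[OF orbit_inv_stage[OF assms]] by linarith
  then have "real N - 1 \<le> T_return / right_transit_time"
    using right_transit_time_pos by (simp add: le_divide_eq mult.commute)
  then show ?thesis using N(1) p(1) by linarith
qed

lemma returns_eventually: "\<exists>k. returns_at k"
proof (rule ccontr)
  assume "\<nexists>k. returns_at k"
  then have "real (nat \<lceil>T_return / right_transit_time\<rceil> + 4) \<le> T_return / right_transit_time + 3"
    using orbit_inv_index_bound orbit_inv_before_return by blast
  then show False by linarith
qed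

section \<open>Angle variables and the final estimate\<close>

lemma phi1_fly_error:
  assumes "ordered_config S" "X_range (pX S)" "\<bar>pX S + pV S * t - X0\<bar> \<le> eps * W_bound * T_return"
    and "0 \<le> t" "energy M m1 m2 S = E0" "\<bar>\<bar>pv1 S\<bar> - s1\<bar> \<le> (C_v1 + C_v2) * eps"
  shows "\<bar>phi1 (fly S t) - phi1 S - s1 / (2 * X0) * t\<bar> \<le> C_phase * eps * t"
proof -
  have X: "X_margin \<le> pX S" "X_margin \<le> pX S + pV S * t" "X_margin \<le> X0"
    using X_range_D assms(2) X_range_if_close[OF assms(3)] X_range_if_close[of X0] eps_pos
      W_bound_ge_1 T_return_pos by auto
  have "\<bar>X0 - (pX S + pV S * t)\<bar> \<le> C_X * eps"
    using assms(3) unfolding C_X_def by (simp add: abs_minus_commute algebra_simps)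
  moreover have "\<bar>if pv1 S < 0 then - pV S else pV S\<bar> \<le> eps * W_bound"
    using energy_level_bounds(2)[OF assms(5)] by simp
  moreover have "0 \<le> px1 S" "px1 S \<le> pX S" using assms(1) unfolding ordered_config_def by auto
  ultimately have "\<bar>t * (\<bar>pv1 S\<bar> * pX S - px1 S * (if pv1 S < 0 then - pV S else pV S))
      / (2 * pX S * (pX S + pV S * t)) - s1 / (2 * X0) * t\<bar> \<le> C_phase * eps * t"
    using phase_rate_error[OF X_margin_pos X _ _ assms(4,6)] s_le_v_bound(1) unfolding C_phase_def
      by simp
  moreover have "pX S \<noteq> 0" "pX S + pV S * t \<noteq> 0" using X X_margin_pos by linarith+
  ultimately show ?thesis by (simp add: phi1_fly_increment)
qed

lemma phi2_fly_error:
  assumes "ordered_config S" "X_range (pX S)" "\<bar>pX S + pV S * t - X0\<bar> \<le> eps * W_bound * T_return"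
    and "0 \<le> t" "energy M m1 m2 S = E0" "\<bar>\<bar>pv2 S\<bar> - s2\<bar> \<le> (C_v1 + C_v2) * eps"
  shows "\<bar>phi2 (fly S t) - phi2 S - s2 / (2 * (1 - X0)) * t\<bar> \<le> C_phase * eps * t"
proof -
  have X: "X_margin \<le> 1 - pX S" "X_margin \<le> 1 - (pX S + pV S * t)" "X_margin \<le> 1 - X0"
    using X_range_D assms(2) X_range_if_close[OF assms(3)] X_range_if_close[of X0] eps_pos
      W_bound_ge_1 T_return_pos by auto
  have "\<bar>(1 - X0) - (1 - (pX S + pV S * t))\<bar> \<le> C_X * eps"
    using assms(3) unfolding C_X_def by (simp add: algebra_simps)
  moreover have "\<bar>if pv2 S < 0 then - pV S else pV S\<bar> \<le> eps * W_bound"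
    using energy_level_bounds(2)[OF assms(5)] by simp
  moreover have "0 \<le> 1 - px2 S" "1 - px2 S \<le> 1 - pX S" using assms(1) unfolding ordered_config_def
    by auto
  ultimately have "\<bar>t * (\<bar>pv2 S\<bar> * (1 - pX S) - (1 - px2 S) * (if pv2 S < 0 then - pV S else pV S))
      / (2 * (1 - pX S) * (1 - (pX S + pV S * t))) - s2 / (2 * (1 - X0)) * t\<bar> \<le> C_phase * eps * t"
    using phase_rate_error[OF X_margin_pos X _ _ assms(4,6)] s_le_v_bound(2) unfolding C_phase_def
      by simp
  moreover have "pX S \<noteq> 1" "pX S + pV S * t \<noteq> 1" using X X_margin_pos by linarith+
  ultimately show ?thesis by (simp add: phi2_fly_increment)
qed

lemma speeds_close:
  assumes "orbit_inv k"
  shows "\<bar>\<bar>pv1 (SS k)\<bar> - s1\<bar> \<le> (C_v1 + C_v2) * eps" "\<bar>\<bar>pv2 (SS k)\<bar> - s2\<bar> \<le> (C_v1 + C_v2) * eps"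
proof -
  note bounds = stage_bounds[OF orbit_inv_stage[OF assms]]
  have "C_v1 * eps \<le> (C_v1 + C_v2) * eps" "C_v2 * eps \<le> (C_v1 + C_v2) * eps"
    using constants_pos eps_pos by (simp_all add: mult_right_mono)
  then show "\<bar>\<bar>pv1 (SS k)\<bar> - s1\<bar> \<le> (C_v1 + C_v2) * eps" "\<bar>\<bar>pv2 (SS k)\<bar> - s2\<bar> \<le> (C_v1 + C_v2) * eps"
    using bounds v2_deviation[OF bounds] by linarith+
qed

lemma X_flight_drift:
  assumes "tt k \<le> t"
  shows "\<bar>pX (SS k) + pV (SS k) * (t - tt k) - X0\<bar> \<le> eps * W_bound * t"
proof -
  have "\<bar>pV (SS k) * (t - tt k)\<bar> \<le> eps * W_bound * (t - tt k)"
    unfolding abs_mult using SS_bounds(2) assms eps_pos W_bound_ge_1 by (intro mult_mono) auto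
  moreover have "eps * W_bound * tt k + eps * W_bound * (t - tt k) = eps * W_bound * t"
    by (simp add: algebra_simps)
  ultimately show ?thesis using X_drift[of k] by linarith
qed

lemma X_flight_range:
  assumes "tt k \<le> t" "t \<le> T_return"
  shows "\<bar>pX (SS k) + pV (SS k) * (t - tt k) - X0\<bar> \<le> eps * W_bound * T_return"
proof -
  have "eps * W_bound * t \<le> eps * W_bound * T_return"
    using assms eps_pos W_bound_ge_1 by (intro mult_left_mono) auto
  then show ?thesis using X_flight_drift[OF assms(1)] by linarith
qed

lemma phase_tracking:
  assumes "\<And>j. j < k \<Longrightarrow> \<not> returns_at j"
  shows "(\<exists>n\<in>\<int>. \<bar>phi1 s0 + s1 / (2 * X0) * tt k - phi1 (SS k) - n\<bar> \<le> C_phase * eps * tt k)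
    \<and> (\<exists>n\<in>\<int>. \<bar>phi2 s0 + s2 / (2 * (1 - X0)) * tt k - phi2 (SS k) - n\<bar> \<le> C_phase * eps * tt k)"
  using assms
proof (induction k)
  case 0
  show ?case by (intro conjI bexI[of _ 0]) simp_all
next
  case (Suc k)
  then obtain n1 n2 where n: "n1 \<in> \<int>" "n2 \<in> \<int>"
    and err1: "\<bar>phi1 s0 + s1 / (2 * X0) * tt k - phi1 (SS k) - n1\<bar> \<le> C_phase * eps * tt k"
    and err2: "\<bar>phi2 s0 + s2 / (2 * (1 - X0)) * tt k - phi2 (SS k) - n2\<bar> \<le> C_phase * eps * tt k"
    by auto
  have inv: "orbit_inv k" "orbit_inv (Suc k)" using orbit_inv_before_return Suc.prems by auto
  obtain d where nd: "next_delay (SS k) = Some d" using orbit_inv_next_delay[OF inv(1)] .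
  let ?F = "fly (SS k) d"
  have d: "0 \<le> d" using next_delay_nonneg[OF ordered_SS nd] .
  have T: "tt k \<le> T_return" "tt (Suc k) \<le> T_return"
    using stage_bounds(1) orbit_inv_stage inv by auto
  have drift: "\<bar>pX (SS k) + pV (SS k) * d - X0\<bar> \<le> eps * W_bound * T_return"
    using X_flight_range[of k "tt (Suc k)"] SS_Suc(1)[OF nd] T d by simp
  have fly1: "\<bar>phi1 ?F - phi1 (SS k) - s1 / (2 * X0) * d\<bar> \<le> C_phase * eps * d"
    by (rule phi1_fly_error[OF ordered_SS X_range_SS[OF T(1)] drift d energy_SS
        speeds_close(1)[OF inv(1)]])
  have fly2: "\<bar>phi2 ?F - phi2 (SS k) - s2 / (2 * (1 - X0)) * d\<bar> \<le> C_phase * eps * d"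
    by (rule phi2_fly_error[OF ordered_SS X_range_SS[OF T(1)] drift d energy_SS
        speeds_close(2)[OF inv(1)]])
  have "0 < pX ?F" "pX ?F < 1" using X_range_D[OF X_range_if_close[OF drift]] by auto
  then have J: "phi1 (SS (Suc k)) - phi1 ?F \<in> \<int>" "phi2 (SS (Suc k)) - phi2 ?F \<in> \<int>"
    using phi_resolve_diff events_Suc_Some(2)[OF nd] by simp_all
  have "\<bar>phi1 s0 + s1 / (2 * X0) * tt (Suc k) - phi1 (SS (Suc k))
      - (n1 - (phi1 (SS (Suc k)) - phi1 ?F))\<bar>
      \<le> C_phase * eps * tt (Suc k)"
    using err1 fly1 SS_Suc(1)[OF nd] unfolding abs_le_iff by (simp add: algebra_simps)
  moreover have "\<bar>phi2 s0 + s2 / (2 * (1 - X0)) * tt (Suc k) - phi2 (SS (Suc k))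
      - (n2 - (phi2 (SS (Suc k)) - phi2 ?F))\<bar>
      \<le> C_phase * eps * tt (Suc k)"
    using err2 fly2 SS_Suc(1)[OF nd] unfolding abs_le_iff by (simp add: algebra_simps)
  ultimately show ?case using n J by (meson Ints_diff)
qed

definition first_return :: nat where
  "first_return = (LEAST k. returns_at k)"

lemma returns_at_first_return: "returns_at first_return"
  unfolding first_return_def using returns_eventually by (metis LeastI)

lemma not_returns_before_first_return: "j < first_return \<Longrightarrow> \<not> returns_at j"
  unfolding first_return_def by (rule not_less_Least)

lemma orbit_inv_upto_first_return: "j \<le> first_return \<Longrightarrow> orbit_inv j"
  using orbit_inv_before_return not_returns_before_first_return by simp

lemma inbound_first_return: "inbound first_return"
  using orbit_inv_stage[OF orbit_inv_upto_first_return] returns_at_first_return v1_s0(1) c_pos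
  unfolding returns_at_def at_start_def outbound_def by fastforce

lemma motion_before_first_return:
  assumes "0 < t" "k \<le> first_return" "tt k < t" "t \<le> tt (Suc k)"
  shows "motion M m1 m2 s0 t = fly (SS k) (t - tt k)"
proof (rule motion_eq_fly_events[OF ordered_s0 assms(1) _ assms(3,4)])
  fix j assume "j \<le> k"
  then show "next_delay (SS j) \<noteq> None"
    using orbit_inv_next_delay[OF orbit_inv_upto_first_return] assms(2)
      by (metis le_trans option.distinct(1))
qed

definition return_time :: real where
  "return_time = tt (Suc first_return)"

lemma return_time:
  shows "tt first_return < return_time" "return_time \<le> T_return"
    and "return_time \<in> return_set eps m1 m2 s0"
proof -
  obtain d where nd: "next_delay (SS first_return) = Some d"
    and hit: "px1 (SS first_return) + pv1 (SS first_return) * d = 0"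
    using returns_at_first_return unfolding returns_at_def by blast
  have t: "return_time = tt first_return + d" unfolding return_time_def using SS_Suc(1)[OF nd] .
  have B: "pv1 (SS first_return) < 0" "\<bar>pv1 (SS first_return) + s1\<bar> \<le> C_v1 * eps"
    "0 < px1 (SS first_return)" "px1 (SS first_return) + c / 2 * tt first_return \<le> 3 / 2"
    using inbound_first_return unfolding inbound_def by auto
  have vc: "pv1 (SS first_return) \<le> - c / 2"
    using B(2) eps_small(4) v1_s0(1) unfolding abs_le_iff by (simp add: mult.commute)
  have d: "0 \<le> d" using next_delay_nonneg[OF ordered_SS nd] .
  then show "tt first_return < return_time" using t hit B(3) by (cases "d = 0") auto
  then have pos: "0 < return_time" using tt_nonneg[of first_return] by linarith
  have "c / 2 * d \<le> - pv1 (SS first_return) * d" using vc d by (intro mult_right_mono) auto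
  then have "c / 2 * return_time \<le> 3 / 2" using B(4) hit t by (simp add: algebra_simps)
  then show "return_time \<le> T_return"
    unfolding T_return_def using c_pos by (simp add: le_divide_eq mult.commute)
  have "motion M m1 m2 s0 return_time = fly (SS first_return) d"
    using motion_before_first_return[OF pos order.refl \<open>tt first_return < return_time\<close>] t
    unfolding return_time_def by simp
  moreover have "phi1 (fly (SS first_return) d) = 1" unfolding phi1_def using B(1) hit by simp
  ultimately show "return_time \<in> return_set eps m1 m2 s0"
    unfolding return_set_def emotion_def using pos by simp
qed

lemma deviation_in_flight:
  assumes k: "k \<le> first_return" and t: "tt k \<le> t" "t \<le> T_return"
  shows "zdist (zfree (zcoord eps s0) t) (zcoord eps (fly (SS k) (t - tt k))) \<le> C_total * eps"
proof -
  let ?F = "fly (SS k) (t - tt k)"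
  have le_total: "C_X * eps \<le> C_total * eps" "C_W * eps \<le> C_total * eps"
    "(C_v1 + C_v2) * eps \<le> C_total * eps" "C_phase * T_return * eps \<le> C_total * eps"
    unfolding C_total_def using constants_pos T_return_pos eps_pos
    by (intro mult_right_mono; simp)+
  have inv: "orbit_inv k" using orbit_inv_upto_first_return[OF k] .
  have Tk: "tt k \<le> T_return" using stage_bounds(1)[OF orbit_inv_stage[OF inv]] .
  have d: "0 \<le> t - tt k" using t by simp
  note drift = X_flight_range[OF t]
  obtain n1 n2 where n: "n1 \<in> \<int>" "n2 \<in> \<int>"
    and err1: "\<bar>phi1 s0 + s1 / (2 * X0) * tt k - phi1 (SS k) - n1\<bar> \<le> C_phase * eps * tt k"
    and err2: "\<bar>phi2 s0 + s2 / (2 * (1 - X0)) * tt k - phi2 (SS k) - n2\<bar> \<le> C_phase * eps * tt k"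
    using phase_tracking[of k] not_returns_before_first_return k by (meson order.strict_trans2)
  have fly1: "\<bar>phi1 ?F - phi1 (SS k) - s1 / (2 * X0) * (t - tt k)\<bar> \<le> C_phase * eps * (t - tt k)"
    by (rule phi1_fly_error[OF ordered_SS X_range_SS[OF Tk] drift d energy_SS
        speeds_close(1)[OF inv]])
  have fly2: "\<bar>phi2 ?F - phi2 (SS k) - s2 / (2 * (1 - X0)) * (t - tt k)\<bar>
      \<le> C_phase * eps * (t - tt k)"
    by (rule phi2_fly_error[OF ordered_SS X_range_SS[OF Tk] drift d energy_SS
        speeds_close(2)[OF inv]])
  have "C_phase * eps * t \<le> C_phase * eps * T_return"
    using t constants_pos eps_pos by (intro mult_left_mono) auto
  also have "\<dots> = C_phase * T_return * eps" by simp
  also have "\<dots> \<le> C_total * eps" by (fact le_total(4))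
  finally have phase_le: "C_phase * eps * t \<le> C_total * eps" .
  have "C_phase * eps * tt k + C_phase * eps * (t - tt k) = C_phase * eps * t"
    by (simp add: algebra_simps)
  then have "circ_dist (phi1 s0 + s1 / (2 * X0) * tt k + s1 / (2 * X0) * (t - tt k)) (phi1 ?F)
      \<le> C_total * eps"
    "circ_dist (phi2 s0 + s2 / (2 * (1 - X0)) * tt k + s2 / (2 * (1 - X0)) * (t - tt k)) (phi2 ?F)
      \<le> C_total * eps"
    using circ_dist_add_le[OF n(1) err1 fly1] circ_dist_add_le[OF n(2) err2 fly2] phase_le
      by linarith+
  moreover have "s1 / (2 * X0) * tt k + s1 / (2 * X0) * (t - tt k) = s1 / (2 * X0) * t"
    "s2 / (2 * (1 - X0)) * tt k + s2 / (2 * (1 - X0)) * (t - tt k) = s2 / (2 * (1 - X0)) * t"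
    by (simp_all add: algebra_simps)
  ultimately have "circ_dist (phi1 s0 + s1 / (2 * X0) * t) (phi1 ?F) \<le> C_total * eps"
    "circ_dist (phi2 s0 + s2 / (2 * (1 - X0)) * t) (phi2 ?F) \<le> C_total * eps"
    by (simp_all only: add.assoc)
  moreover have "\<bar>X0 - pX ?F\<bar> \<le> C_total * eps"
  proof -
    have "\<bar>X0 - pX ?F\<bar> \<le> eps * W_bound * t" using X_flight_drift[OF t(1)]
      by (simp add: abs_minus_commute)
    also have "\<dots> \<le> C_X * eps"
      unfolding C_X_def using t eps_pos W_bound_ge_1 by (simp add: mult.commute mult_left_mono)
    finally show ?thesis using le_total(1) by linarith
  qed
  moreover have "\<bar>pV s0 / eps - pV ?F / eps\<bar> \<le> C_total * eps"
    using W_deviation[OF Tk] le_total(2) by (simp add: abs_minus_commute)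
  moreover have "\<bar>s1 - \<bar>pv1 ?F\<bar>\<bar> \<le> C_total * eps" "\<bar>s2 - \<bar>pv2 ?F\<bar>\<bar> \<le> C_total * eps"
    using speeds_close[OF inv] le_total(3) by (simp_all add: abs_minus_commute)
  ultimately show ?thesis
    unfolding zfree_def zcoord_def by (simp add: zdist_le)
qed

lemma motion_in_flight:
  assumes "0 \<le> t" "t \<le> return_time"
  obtains k where "k \<le> first_return" "tt k \<le> t" "motion M m1 m2 s0 t = fly (SS k) (t - tt k)"
proof (cases "t = 0")
  case True
  then show ?thesis using that[of 0] unfolding motion_def by (simp add: fly_def)
next
  case False
  define k where "k = (LEAST j. t \<le> tt (Suc j))"
  have le: "t \<le> tt (Suc k)" unfolding k_def using assms(2) unfolding return_time_def
    by (rule LeastI)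
  have k: "k \<le> first_return" unfolding k_def using assms(2) unfolding return_time_def
    by (rule Least_le)
  have "tt k < t"
  proof (cases k)
    case 0
    then show ?thesis using assms(1) False by simp
  next
    case (Suc j)
    then have "\<not> t \<le> tt (Suc j)" unfolding k_def by (metis lessI not_less_Least)
    then show ?thesis using Suc by simp
  qed
  then show ?thesis
    using that[OF k] motion_before_first_return[OF _ k _ le] assms(1) False by simp
qed

lemma deviation_until_return:
  assumes "t \<in> {0 .. Inf (return_set eps m1 m2 s0)}"
  shows "zdist (zfree (zcoord eps s0) t) (zcoord eps (emotion eps m1 m2 s0 t)) \<le> C_total * eps"
proof -
  have "bdd_below (return_set eps m1 m2 s0)"
    unfolding return_set_def by (rule bdd_belowI[of _ 0]) simp
  then have "Inf (return_set eps m1 m2 s0) \<le> return_time" by (rule cInf_lower[OF return_time(3)])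
  then have t: "0 \<le> t" "t \<le> return_time" using assms by auto
  then obtain k where "k \<le> first_return" "tt k \<le> t" "motion M m1 m2 s0 t = fly (SS k) (t - tt k)"
    by (rule motion_in_flight)
  moreover have "t \<le> T_return" using t return_time(2) by linarith
  ultimately show ?thesis unfolding emotion_def using deviation_in_flight by simp
qed

end

lemma slow_variable_bounds:
  fixes Vs :: "(real \<times> real \<times> real \<times> real) set"
  assumes "\<exists>A B Cs. compact A \<and> A \<subseteq> {0<..<1} \<and> compact B \<and> compact Cs \<and> Cs \<subseteq> {0<..}
           \<and> (\<forall>(X, W, s1, s2) \<in> Vs. X \<in> A \<and> W \<in> B \<and> s1 \<in> Cs \<and> s2 \<in> Cs)"
  obtains a b c Bm D where "0 < a" "b < 1" "0 < c"
    and "\<And>X W s1 s2. (X, W, s1, s2) \<in> Vs \<Longrightarrow>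
      a \<le> X \<and> X \<le> b \<and> \<bar>W\<bar> \<le> Bm \<and> c \<le> s1 \<and> s1 \<le> D \<and> c \<le> s2 \<and> s2 \<le> D"
proof -
  obtain A B Cs where "compact A" "A \<subseteq> {0<..<1}" "compact B" "compact Cs" "Cs \<subseteq> {0<..}"
    and "\<forall>(X, W, s1, s2) \<in> Vs. X \<in> A \<and> W \<in> B \<and> s1 \<in> Cs \<and> s2 \<in> Cs"
    using assms by blast
  moreover obtain a b where "a \<in> {0<..<1}" "b \<in> {0<..<1}" "A \<subseteq> {a..b}"
    by (rule compact_real_subset_Icc[OF \<open>compact A\<close> \<open>A \<subseteq> {0<..<1}\<close>]) auto
  moreover obtain c D where "c \<in> {0<..}" "Cs \<subseteq> {c..D}"
    by (rule compact_real_subset_Icc[OF \<open>compact Cs\<close> \<open>Cs \<subseteq> {0<..}\<close>]) auto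
  moreover obtain Bm where "\<forall>W\<in>B. \<bar>W\<bar> \<le> Bm"
    using compact_imp_bounded[OF \<open>compact B\<close>] bounded_real by blast
  ultimately show ?thesis using that[of a b c Bm D] by fastforce
qed

lemma (in piston_constants) deviation_bound:
  assumes "0 < eps" "eps \<le> eps_max" "ordered_config s0" "phi1 s0 \<in> \<int>"
    and "a \<le> pX s0" "pX s0 \<le> b" "\<bar>pV s0 / eps\<bar> \<le> Bm"
    and "c \<le> \<bar>pv1 s0\<bar>" "\<bar>pv1 s0\<bar> \<le> D" "c \<le> \<bar>pv2 s0\<bar>" "\<bar>pv2 s0\<bar> \<le> D"
    and "t \<in> {0 .. Inf (return_set eps m1 m2 s0)}"
  shows "zdist (zfree (zcoord eps s0) t) (zcoord eps (emotion eps m1 m2 s0 t)) \<le> C_total * eps"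
proof -
  have "px1 s0 = 0" using px1_eq_0_if_phi1_Ints[OF assms(3) _ assms(4)] assms(5) a_pos by simp
  then interpret piston_orbit m1 m2 a b c D Bm eps s0
    using assms by unfold_locales auto
  show ?thesis by (rule deviation_until_return[OF assms(12)])
qed

theorem mainTheorem9:
  fixes m1 m2 T :: real and Vs :: "(real \<times> real \<times> real \<times> real) set"
  assumes "m1 > 0" and "m2 > 0" and "T > 0" and "compact Vs"
    and "\<exists>A B Cs. compact A \<and> A \<subseteq> {0<..<1} \<and> compact B \<and> compact Cs \<and> Cs \<subseteq> {0<..}
           \<and> (\<forall>(X, W, s1, s2) \<in> Vs. X \<in> A \<and> W \<in> B \<and> s1 \<in> Cs \<and> s2 \<in> Cs)"
  shows "\<exists>eps1 > 0. \<exists>C > 0. \<forall>eps \<in> {0<..eps1}. \<forall>s0 hb.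
     0 \<le> px1 s0 \<and> px1 s0 \<le> pX s0 \<and> pX s0 \<le> px2 s0 \<and> px2 s0 \<le> 1
     \<longrightarrow> hslow eps s0 \<in> Vs
     \<longrightarrow> phi1 s0 \<in> \<int>
     \<longrightarrow> hb 0 = hslow eps s0
     \<longrightarrow> (\<forall>\<tau> \<ge> 0. (hb has_vector_derivative Hbar m1 m2 (hb \<tau>)) (at \<tau> within {0..}))
     \<longrightarrow> return_set eps m1 m2 s0 \<noteq> {}
     \<longrightarrow> Inf (return_set eps m1 m2 s0) \<le> T_min T (exit_set eps m1 m2 Vs s0 hb) / eps
     \<longrightarrow> (\<forall>t \<in> {0 .. Inf (return_set eps m1 m2 s0)}.
            zdist (zfree (zcoord eps s0) t) (zcoord eps (emotion eps m1 m2 s0 t)) \<le> C * eps)"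
proof -
  obtain a b c Bm D where params: "0 < a" "b < 1" "0 < c"
    and box: "\<And>X W s1 s2. (X, W, s1, s2) \<in> Vs \<Longrightarrow>
      a \<le> X \<and> X \<le> b \<and> \<bar>W\<bar> \<le> Bm \<and> c \<le> s1 \<and> s1 \<le> D \<and> c \<le> s2 \<and> s2 \<le> D"
    using slow_variable_bounds[OF assms(5)] by metis
  interpret piston_constants m1 m2 a b c D Bm
    using assms(1,2) params by unfold_locales
  show ?thesis
  proof (rule exI[of _ eps_max],
      intro conjI eps_max_pos exI[of _ C_total] constants_pos(6) ballI allI impI, goal_cases)
    case (1 eps s0 hb t)
    have "a \<le> pX s0 \<and> pX s0 \<le> b \<and> \<bar>pV s0 / eps\<bar> \<le> Bm
        \<and> c \<le> \<bar>pv1 s0\<bar> \<and> \<bar>pv1 s0\<bar> \<le> D \<and> c \<le> \<bar>pv2 s0\<bar> \<and> \<bar>pv2 s0\<bar> \<le> D"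
      using box 1(3) unfolding hslow_def by blast
    with 1(1,2,4,9) show ?case
      by (intro deviation_bound) (auto simp: ordered_config_def)
  qed
qed

end
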